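(* Let $A\in\mathbb{R}^{n\times n}$ be monotone, let $A=P_1-R_1+S_1$ be a double weak regular splitting and $A=P_2-R_2+S_2$ a double regular splitting of $A$. Suppose $1\notin\sigma(S_2P_1^{-1})$ and $\widehat{A}^{-1}\geq 0$, where $\widehat{A}=(I-S_2P_1^{-1})A$. If $P_1^{-1}\leq P_2^{-1}$ and $P_1^{-1}R_1\leq P_2^{-1}R_2$, then $\rho(W_{12})\leq\rho(T_1)<1$, where $$W_{12}=\begin{pmatrix} P_2^{-1}R_2-P_2^{-1}S_2P_1^{-1}R_1 & P_2^{-1}S_2P_1^{-1}S_1\\ I & 0\end{pmatrix},\qquad T_1=\begin{pmatrix} P_1^{-1}R_1 & -P_1^{-1}S_1\\ I&0\end{pmatrix}.$$
   Context: Inequalities are entrywise; $\rho$ is the spectral radius, $\sigma$ the spectrum. $A$ is monotone if $A$ is nonsingular and $A^{-1}\geq 0$. A double splitting $A=P-R+S$ with $P$ nonsingular is a double regular splitting if $P^{-1}\geq0$, $R\geq0$, $S\leq0$, and a double weak regular splitting if $P^{-1}\geq 0$, $P^{-1}R\geq0$, $P^{-1}S\leq0$. *)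

theory Defs
  imports "Jordan_Normal_Form.Spectral_Radius"
begin

definition rho :: "real mat \<Rightarrow> real" where
  "rho M = spectral_radius (map_mat complex_of_real M)"

definition is_inv :: "nat \<Rightarrow> real mat \<Rightarrow> real mat \<Rightarrow> bool" where
  "is_inv n M B \<longleftrightarrow> M \<in> carrier_mat n n \<and> B \<in> carrier_mat n n \<and>
     M * B = 1\<^sub>m n \<and> B * M = 1\<^sub>m n"

definition monotone_with_inv :: "nat \<Rightarrow> real mat \<Rightarrow> real mat \<Rightarrow> bool" where
  "monotone_with_inv n A iA \<longleftrightarrow> is_inv n A iA \<and> iA \<ge> 0\<^sub>m n n"

definition double_splitting :: "nat \<Rightarrow> real mat \<Rightarrow> real mat \<Rightarrow> real mat \<Rightarrow> real mat \<Rightarrow> real mat \<Rightarrow> bool" where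
  "double_splitting n A P R S iP \<longleftrightarrow> A \<in> carrier_mat n n \<and> R \<in> carrier_mat n n \<and>
     S \<in> carrier_mat n n \<and> is_inv n P iP \<and> A = P - R + S"

definition double_regular_splitting :: "nat \<Rightarrow> real mat \<Rightarrow> real mat \<Rightarrow> real mat \<Rightarrow> real mat \<Rightarrow> real mat \<Rightarrow> bool" where
  "double_regular_splitting n A P R S iP \<longleftrightarrow> double_splitting n A P R S iP \<and>
     iP \<ge> 0\<^sub>m n n \<and> R \<ge> 0\<^sub>m n n \<and> S \<le> 0\<^sub>m n n"

definition double_weak_regular_splitting :: "nat \<Rightarrow> real mat \<Rightarrow> real mat \<Rightarrow> real mat \<Rightarrow> real mat \<Rightarrow> real mat \<Rightarrow> bool" where
  "double_weak_regular_splitting n A P R S iP \<longleftrightarrow> double_splitting n A P R S iP \<and>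
     iP \<ge> 0\<^sub>m n n \<and> iP * R \<ge> 0\<^sub>m n n \<and> iP * S \<le> 0\<^sub>m n n"

end

(*
  Write H_i = P_i^-1 R_i and K_i = - P_i^-1 S_i, which are nonnegative. With the block companion
  matrix T(H, K) = [H, K; I, 0] of the pencil l^2 I - l H - K, we have T_1 = T(H_1, K_1) and
  W_12 = T(H_2 + K_2 H_1, K_2 K_1).

  The argument avoids Perron-Frobenius theory: spectral radii of nonnegative matrices are bounded
  below by nonnegative subeigenvectors (s x <= B x forces s <= rho B, by comparing the growth of
  B^k x with rho B) and, for T(H, K), above by positive vectors u with t H u + K u < t^2 u (a
  maximal ratio argument against the modulus of an eigenvector).

  rho T_1 < 1: take u = A^-1 1, since H_1 + K_1 = I - P_1^-1 A.
  rho T_2 <= rho T_1: for the regular splitting of the monotone A, (I - T_2)^-1 is nonnegative;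
  it maps T_2^2 y, for a subeigenvector y of T_2, to a subeigenvector w = (w_1, w_2) of T_2 with
  w_1 <= w_2 and A w_2 >= 0, and for such w the comparison hypotheses give T_2 w <= T_1 w.
  rho W_12 <= rho T_2: for rho T_2 < t < 1 a Neumann series gives x > 0 with
  t H_2 x + K_2 x < t^2 x and A x >= 0; then t H_1 x + K_1 x <= x, and x certifies rho W_12 < t.
*)
theory Submission
  imports Defs
begin

section \<open>Nonnegative matrices and vectors\<close>

lemma mult_mat_vec_index_sum:
  "A \<in> carrier_mat n m \<Longrightarrow> v \<in> carrier_vec m \<Longrightarrow> i < n \<Longrightarrow> (A *\<^sub>v v) $ i = (\<Sum>j<m. A $$ (i, j) * v $ j)"
  by (simp add: scalar_prod_def lessThan_atLeast0 ac_simps)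

lemma nonneg_mat_index: "0\<^sub>m n m \<le> (B :: real mat) \<Longrightarrow> i < n \<Longrightarrow> j < m \<Longrightarrow> 0 \<le> B $$ (i, j)"
  unfolding less_eq_mat_def by auto

lemma nonneg_vec_index: "0\<^sub>v n \<le> (x :: real vec) \<Longrightarrow> i < n \<Longrightarrow> 0 \<le> x $ i"
  unfolding less_eq_vec_def by auto

lemma le_vec_index: "(x :: real vec) \<le> y \<Longrightarrow> i < dim_vec y \<Longrightarrow> x $ i \<le> y $ i"
  unfolding less_eq_vec_def by auto

lemma le_vecI:
  "x \<in> carrier_vec n \<Longrightarrow> y \<in> carrier_vec n \<Longrightarrow> (\<And>i. i < n \<Longrightarrow> (x :: real vec) $ i \<le> y $ i) \<Longrightarrow> x \<le> y"
  unfolding less_eq_vec_def by auto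

lemma nonneg_vec_nonzero_pos_index:
  fixes x :: "real vec"
  assumes "x \<in> carrier_vec N" "0\<^sub>v N \<le> x" "x \<noteq> 0\<^sub>v N"
  obtains i where "i < N" "0 < x $ i"
proof -
  obtain i where "i < N" "x $ i \<noteq> 0"
    using assms(1,3) by (metis carrier_vecD eq_vecI index_zero_vec)
  then show thesis
    using that nonneg_vec_index[OF assms(2)] by force
qed

lemma nonzero_if_ge_smult:
  fixes x w :: "real vec"
  assumes "x \<in> carrier_vec N" "0\<^sub>v N \<le> x" "x \<noteq> 0\<^sub>v N" "0 < c" "c \<cdot>\<^sub>v x \<le> w"
  shows "w \<noteq> 0\<^sub>v N"
proof
  assume "w = 0\<^sub>v N"
  obtain j where j: "j < N" "0 < x $ j"
    using nonneg_vec_nonzero_pos_index[OF assms(1-3)] .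
  then have "c * x $ j \<le> 0"
    using le_vec_index[OF assms(5), of j] \<open>w = 0\<^sub>v N\<close> assms(1) by simp
  with j assms(4) show False
    by (simp add: mult_le_0_iff)
qed

lemma max_ratio_index:
  fixes y u :: "real vec"
  assumes y: "y \<in> carrier_vec n" and u: "u \<in> carrier_vec n" "\<And>i. i < n \<Longrightarrow> 0 < u $ i"
    and n: "0 < n"
  obtains m i0 where "i0 < n" "y \<le> m \<cdot>\<^sub>v u" "y $ i0 = m * u $ i0"
proof -
  define m where "m = Max ((\<lambda>j. y $ j / u $ j) ` {..<n})"
  have "m \<in> (\<lambda>j. y $ j / u $ j) ` {..<n}"
    unfolding m_def using n by (intro Max_in) auto
  then obtain i0 where i0: "i0 < n" "m = y $ i0 / u $ i0"
    by auto
  have "y $ j \<le> m * u $ j" if "j < n" for j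
    using Max_ge[of "(\<lambda>j. y $ j / u $ j) ` {..<n}" "y $ j / u $ j"] u(2)[OF that] that
    unfolding m_def by (auto simp: divide_le_eq)
  then have "y \<le> m \<cdot>\<^sub>v u"
    using y u by (intro le_vecI[of _ n]) auto
  with i0 u(2)[OF i0(1)] show thesis
    by (intro that) auto
qed

lemma uminus_mat_nonneg:
  "(M :: real mat) \<in> carrier_mat n m \<Longrightarrow> M \<le> 0\<^sub>m n m \<Longrightarrow> 0\<^sub>m n m \<le> - M"
  unfolding less_eq_mat_def by auto

lemma mult_mat_vec_mono_left:
  fixes M1 M2 :: "real mat"
  assumes "M1 \<in> carrier_mat n m" "M2 \<in> carrier_mat n m" "M1 \<le> M2"
    and "y \<in> carrier_vec m" "0\<^sub>v m \<le> y"
  shows "M1 *\<^sub>v y \<le> M2 *\<^sub>v y"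
proof (rule le_vecI)
  fix i assume i: "i < n"
  have "M1 $$ (i, j) * y $ j \<le> M2 $$ (i, j) * y $ j" if "j < m" for j
    using assms i that by (intro mult_right_mono) (auto simp: less_eq_mat_def less_eq_vec_def)
  then show "(M1 *\<^sub>v y) $ i \<le> (M2 *\<^sub>v y) $ i"
    unfolding mult_mat_vec_index_sum[OF assms(1,4) i] mult_mat_vec_index_sum[OF assms(2,4) i]
    by (auto intro: sum_mono)
qed (use assms in auto)

lemma mult_mat_vec_mono:
  fixes B :: "real mat"
  assumes "B \<in> carrier_mat n m" "0\<^sub>m n m \<le> B"
    and "x \<in> carrier_vec m" "y \<in> carrier_vec m" "x \<le> y"
  shows "B *\<^sub>v x \<le> B *\<^sub>v y"
proof (rule le_vecI)
  fix i assume i: "i < n"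
  have "B $$ (i, j) * x $ j \<le> B $$ (i, j) * y $ j" if "j < m" for j
    using assms i that by (intro mult_left_mono) (auto simp: less_eq_mat_def less_eq_vec_def)
  then show "(B *\<^sub>v x) $ i \<le> (B *\<^sub>v y) $ i"
    unfolding mult_mat_vec_index_sum[OF assms(1,3) i] mult_mat_vec_index_sum[OF assms(1,4) i]
    by (auto intro: sum_mono)
qed (use assms in auto)

lemma mult_mat_vec_nonneg:
  fixes B :: "real mat"
  assumes "B \<in> carrier_mat n m" "0\<^sub>m n m \<le> B" "x \<in> carrier_vec m" "0\<^sub>v m \<le> x"
  shows "0\<^sub>v n \<le> B *\<^sub>v x"
proof -
  have "B *\<^sub>v 0\<^sub>v m = 0\<^sub>v n"
    using assms(1) by (intro eq_vecI) auto
  then show ?thesis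
    using mult_mat_vec_mono[OF assms(1,2) _ assms(3,4)] by simp
qed

lemma subeigenvector_mult_mat_vec:
  fixes B :: "real mat"
  assumes "B \<in> carrier_mat N N" "0\<^sub>m N N \<le> B" "x \<in> carrier_vec N" "s \<cdot>\<^sub>v x \<le> B *\<^sub>v x"
  shows "s \<cdot>\<^sub>v (B *\<^sub>v x) \<le> B *\<^sub>v (B *\<^sub>v x)"
  using mult_mat_vec_mono[OF assms(1,2) _ _ assms(4)] assms by (simp add: mult_mat_vec)

lemma mult_mat_nonneg:
  fixes A B :: "real mat"
  assumes "A \<in> carrier_mat n m" "0\<^sub>m n m \<le> A" "B \<in> carrier_mat m k" "0\<^sub>m m k \<le> B"
  shows "0\<^sub>m n k \<le> A * B"
proof -
  have "0 \<le> (A * B) $$ (i, j)" if "i < n" "j < k" for i j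
    using assms that
    by (auto simp: scalar_prod_def intro!: sum_nonneg mult_nonneg_nonneg nonneg_mat_index)
  then show ?thesis
    using assms unfolding less_eq_mat_def by auto
qed

lemma pow_mat_nonneg:
  fixes B :: "real mat"
  assumes "B \<in> carrier_mat n n" "0\<^sub>m n n \<le> B"
  shows "0\<^sub>m n n \<le> B ^\<^sub>m k"
proof (induction k)
  case 0
  then show ?case using assms(1) by (auto simp: less_eq_mat_def)
next
  case (Suc k)
  then show ?case
    using mult_mat_nonneg[OF pow_carrier_mat[OF assms(1)] _ assms] by simp
qed

lemma subeigenvector_pow_mat:
  fixes B :: "real mat"
  assumes B: "B \<in> carrier_mat N N" "0\<^sub>m N N \<le> B"
    and x: "x \<in> carrier_vec N" and s: "0 \<le> s" and Bx: "s \<cdot>\<^sub>v x \<le> B *\<^sub>v x"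
  shows "s ^ k \<cdot>\<^sub>v x \<le> B ^\<^sub>m k *\<^sub>v x"
proof (induction k)
  case 0
  then show ?case
    using x B by simp
next
  case (Suc k)
  have Bk: "B ^\<^sub>m k \<in> carrier_mat N N" "0\<^sub>m N N \<le> B ^\<^sub>m k"
    using B by (auto intro: pow_mat_nonneg)
  have "s ^ Suc k \<cdot>\<^sub>v x = s \<cdot>\<^sub>v (s ^ k \<cdot>\<^sub>v x)"
    by (simp add: smult_smult_assoc)
  also have "\<dots> \<le> s \<cdot>\<^sub>v (B ^\<^sub>m k *\<^sub>v x)"
    using Suc s by (auto simp: less_eq_vec_def intro: mult_left_mono)
  also have "\<dots> = B ^\<^sub>m k *\<^sub>v (s \<cdot>\<^sub>v x)"
    using Bk x by (simp add: mult_mat_vec)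
  also have "\<dots> \<le> B ^\<^sub>m k *\<^sub>v (B *\<^sub>v x)"
    using mult_mat_vec_mono[OF Bk _ _ Bx] B x by simp
  also have "\<dots> = B ^\<^sub>m Suc k *\<^sub>v x"
    using assoc_mult_mat_vec[OF Bk(1) B(1) x] by simp
  finally show ?case .
qed

lemma nonneg_inverse_mult_ones_pos:
  fixes iP P :: "real mat"
  assumes "iP \<in> carrier_mat n n" "P \<in> carrier_mat n n" "0\<^sub>m n n \<le> iP" "iP * P = 1\<^sub>m n"
    and i: "i < n"
  shows "0 < (iP *\<^sub>v vec n (\<lambda>_. 1)) $ i"
proof -
  have row_nonneg: "0 \<le> iP $$ (i, j)" if "j < n" for j
    using nonneg_mat_index[OF assms(3) i that] .
  have "(\<Sum>j<n. iP $$ (i, j)) \<noteq> 0"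
  proof
    assume "(\<Sum>j<n. iP $$ (i, j)) = 0"
    then have row_zero: "iP $$ (i, j) = 0" if "j < n" for j
      using sum_nonneg_eq_0_iff[of "{..<n}" "\<lambda>j. iP $$ (i, j)"] row_nonneg that by auto
    have "1 = (iP * P) $$ (i, i)"
      using assms(4) i by simp
    also have "\<dots> = (\<Sum>j<n. iP $$ (i, j) * P $$ (j, i))"
      using assms(1,2) i by (simp add: scalar_prod_def lessThan_atLeast0)
    also have "\<dots> = 0"
      using row_zero by simp
    finally show False
      by simp
  qed
  moreover have "0 \<le> (\<Sum>j<n. iP $$ (i, j))"
    using row_nonneg by (auto intro: sum_nonneg)
  ultimately show ?thesis
    using mult_mat_vec_index_sum[OF assms(1) _ i, of "vec n (\<lambda>_. 1)"] by simp
qed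

lemma mult_mat_vec_uminus:
  "A \<in> carrier_mat n m \<Longrightarrow> v \<in> carrier_vec m \<Longrightarrow> A *\<^sub>v (- v) = - (A *\<^sub>v (v :: 'a :: comm_ring_1 vec))"
  by (intro eq_vecI) (auto simp: scalar_prod_def sum_negf[symmetric])

lemma smult_mult_mat_vec:
  "A \<in> carrier_mat n m \<Longrightarrow> v \<in> carrier_vec m \<Longrightarrow> (c \<cdot>\<^sub>m A) *\<^sub>v v = c \<cdot>\<^sub>v (A *\<^sub>v (v :: 'a :: comm_ring vec))"
  by (intro eq_vecI) (auto simp: scalar_prod_def sum_distrib_left ac_simps)

lemma pow_smult_mat:
  "A \<in> carrier_mat n n \<Longrightarrow> (c \<cdot>\<^sub>m A) ^\<^sub>m k = c ^ k \<cdot>\<^sub>m A ^\<^sub>m (k :: nat)"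
  for A :: "'a :: comm_ring_1 mat"
  by (induction k) (auto intro!: eq_matI simp: mult_smult_assoc_mat mult_smult_distrib)

lemma smult_append_vec: "c \<cdot>\<^sub>v (a @\<^sub>v b) = (c \<cdot>\<^sub>v a) @\<^sub>v (c \<cdot>\<^sub>v b)"
  by (rule eq_vecI) auto

lemma zero_append_vec: "0\<^sub>v (n + m) = 0\<^sub>v n @\<^sub>v 0\<^sub>v m"
  by (rule eq_vecI) auto

lemma append_vec_eq_zero_iff:
  "a \<in> carrier_vec n \<Longrightarrow> b \<in> carrier_vec m \<Longrightarrow> a @\<^sub>v b = 0\<^sub>v (n + m) \<longleftrightarrow> a = 0\<^sub>v n \<and> b = 0\<^sub>v m"
  unfolding zero_append_vec by (rule append_vec_eq) auto

lemma append_vec_nonneg_iff: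
  "a \<in> carrier_vec n \<Longrightarrow> 0\<^sub>v (n + m) \<le> a @\<^sub>v b \<longleftrightarrow> 0\<^sub>v n \<le> a \<and> 0\<^sub>v m \<le> (b :: real vec)"
  unfolding zero_append_vec by (rule append_vec_le) auto

lemma append_vec_minus:
  "a \<in> carrier_vec n \<Longrightarrow> c \<in> carrier_vec n \<Longrightarrow> dim_vec b = dim_vec d \<Longrightarrow>
    (a @\<^sub>v b) - (c @\<^sub>v d) = (a - c) @\<^sub>v (b - d)"
  by (intro eq_vecI) auto


section \<open>Spectral radius of nonnegative matrices\<close>

lemma rho_eigenvalue:
  fixes M :: "real mat"
  assumes "M \<in> carrier_mat N N" "0 < N"
  obtains l where "eigenvalue (map_mat complex_of_real M) l" "cmod l = rho M"
  using spectral_radius_mem_max(1)[of "map_mat complex_of_real M" N] assms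
  unfolding rho_def spectrum_def by auto

lemma eigenvalue_le_rho:
  fixes M :: "real mat"
  assumes M: "M \<in> carrier_mat N N" and l: "eigenvalue (map_mat complex_of_real M) l"
  shows "cmod l \<le> rho M"
proof -
  have "0 < N"
    using eigenvalue_imp_nonzero_dim[OF _ l] M by simp
  then show ?thesis
    using spectral_radius_mem_max(2)[of "map_mat complex_of_real M" N "cmod l"] M l
    unfolding rho_def spectrum_def by auto
qed

lemma rho_nonneg: "(M :: real mat) \<in> carrier_mat N N \<Longrightarrow> 0 < N \<Longrightarrow> 0 \<le> rho M"
  by (metis rho_eigenvalue norm_ge_zero)

lemma norm_mult_mat_vec_le:
  fixes M :: "real mat" and v :: "complex vec"
  assumes M: "M \<in> carrier_mat n m" "0\<^sub>m n m \<le> M" and v: "v \<in> carrier_vec m" and i: "i < n"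
  shows "cmod ((map_mat complex_of_real M *\<^sub>v v) $ i) \<le> (M *\<^sub>v map_vec cmod v) $ i"
proof -
  have "cmod ((map_mat complex_of_real M *\<^sub>v v) $ i)
      = cmod (\<Sum>j<m. complex_of_real (M $$ (i, j)) * v $ j)"
    using mult_mat_vec_index_sum[of "map_mat complex_of_real M" n m v i] M v i by simp
  also have "\<dots> \<le> (\<Sum>j<m. cmod (complex_of_real (M $$ (i, j)) * v $ j))"
    by (rule norm_sum)
  also have "\<dots> = (\<Sum>j<m. M $$ (i, j) * cmod (v $ j))"
    using nonneg_mat_index[OF M(2) i] by (auto simp: norm_mult intro: sum.cong)
  also have "\<dots> = (M *\<^sub>v map_vec cmod v) $ i"
    using mult_mat_vec_index_sum[OF M(1) _ i, of "map_vec cmod v"] v by simp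
  finally show ?thesis .
qed

lemma map_vec_cmod_nonneg: "v \<in> carrier_vec n \<Longrightarrow> 0\<^sub>v n \<le> map_vec cmod v"
  unfolding less_eq_vec_def by auto

lemma map_vec_cmod_nonzero:
  assumes "v \<in> carrier_vec n" "v \<noteq> 0\<^sub>v n"
  shows "map_vec cmod v \<noteq> 0\<^sub>v n"
proof
  assume "map_vec cmod v = 0\<^sub>v n"
  then have "v $ i = 0" if "i < n" for i
    using assms(1) that by (metis carrier_vecD index_map_vec(1) index_zero_vec(1) norm_eq_zero)
  then show False
    using assms by (auto intro: eq_vecI)
qed

lemma rho_subeigenvector:
  fixes B :: "real mat"
  assumes B: "B \<in> carrier_mat N N" "0\<^sub>m N N \<le> B" and N: "0 < N"
  obtains x where "x \<in> carrier_vec N" "0\<^sub>v N \<le> x" "x \<noteq> 0\<^sub>v N" "rho B \<cdot>\<^sub>v x \<le> B *\<^sub>v x"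
proof -
  obtain l where "eigenvalue (map_mat complex_of_real B) l" and l: "cmod l = rho B"
    using rho_eigenvalue[OF B(1) N] .
  then obtain v where v: "v \<in> carrier_vec N" "v \<noteq> 0\<^sub>v N" "map_mat complex_of_real B *\<^sub>v v = l \<cdot>\<^sub>v v"
    using B unfolding eigenvalue_def eigenvector_def by auto
  have "rho B \<cdot>\<^sub>v map_vec cmod v \<le> B *\<^sub>v map_vec cmod v"
  proof (rule le_vecI)
    fix i assume "i < N"
    then show "(rho B \<cdot>\<^sub>v map_vec cmod v) $ i \<le> (B *\<^sub>v map_vec cmod v) $ i"
      using norm_mult_mat_vec_le[OF B v(1)] v(1,3) l by (simp add: norm_mult)
  qed (use B v in auto)
  with map_vec_cmod_nonneg[OF v(1)] map_vec_cmod_nonzero[OF v(1,2)] v(1) show thesis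
    by (intro that) auto
qed

lemma pow_mat_index_bound:
  fixes B :: "real mat"
  assumes B: "B \<in> carrier_mat N N" and N: "0 < N" and r: "rho B < r"
  obtains C where "\<And>k i j. i < N \<Longrightarrow> j < N \<Longrightarrow> \<bar>(B ^\<^sub>m k) $$ (i, j)\<bar> \<le> C * r ^ k"
proof -
  have r0: "0 < r"
    using rho_nonneg[OF B N] r by linarith
  define D where "D = map_mat complex_of_real ((1 / r) \<cdot>\<^sub>m B)"
  have D: "D \<in> carrier_mat N N"
    using B by (simp add: D_def)
  have "spectral_radius D < 1"
  proof -
    obtain mu where "eigenvalue D mu" and mu: "spectral_radius D = cmod mu"
      using spectral_radius_mem_max(1)[OF D N] unfolding spectrum_def by auto
    then obtain v where v: "v \<in> carrier_vec N" "v \<noteq> 0\<^sub>v N" "D *\<^sub>v v = mu \<cdot>\<^sub>v v"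
      using D unfolding eigenvalue_def eigenvector_def by auto
    have "map_mat complex_of_real B = complex_of_real r \<cdot>\<^sub>m D"
      using B r0 by (auto simp: D_def)
    then have "map_mat complex_of_real B *\<^sub>v v = (complex_of_real r * mu) \<cdot>\<^sub>v v"
      using D v by (simp add: smult_mult_mat_vec smult_smult_assoc)
    then have "eigenvalue (map_mat complex_of_real B) (complex_of_real r * mu)"
      using B v unfolding eigenvalue_def eigenvector_def by auto
    then have "r * cmod mu \<le> rho B"
      using eigenvalue_le_rho[OF B] r0 by (fastforce simp: norm_mult)
    then have "r * cmod mu < r"
      using r by linarith
    then show ?thesis
      using r0 mu by simp
  qed
  then obtain c where c: "\<And>k. norm_bound (D ^\<^sub>m k) c"
    using spectral_radius_jnf_norm_bound_less_1_upper_triangular[OF D] by auto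
  show thesis
  proof (rule that)
    fix k i j assume ij: "i < N" "j < N"
    have "D ^\<^sub>m k = map_mat complex_of_real (((1 / r) \<cdot>\<^sub>m B) ^\<^sub>m k)"
      unfolding D_def by (rule of_real_hom.mat_hom_pow[symmetric, of _ N]) (use B in simp)
    also have "\<dots> = map_mat complex_of_real ((1 / r) ^ k \<cdot>\<^sub>m B ^\<^sub>m k)"
      using B by (simp add: pow_smult_mat)
    finally have "(1 / r) ^ k * \<bar>(B ^\<^sub>m k) $$ (i, j)\<bar> \<le> c"
      using c[of k] ij B r0 unfolding norm_bound_def
      by (auto simp: norm_mult norm_power norm_divide)
    then show "\<bar>(B ^\<^sub>m k) $$ (i, j)\<bar> \<le> c * r ^ k"
      using r0 by (simp add: power_one_over field_simps)
  qed
qed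

lemma subeigenvector_le_rho:
  fixes B :: "real mat"
  assumes B: "B \<in> carrier_mat N N" "0\<^sub>m N N \<le> B"
    and x: "x \<in> carrier_vec N" "0\<^sub>v N \<le> x" "x \<noteq> 0\<^sub>v N" and Bx: "s \<cdot>\<^sub>v x \<le> B *\<^sub>v x"
  shows "s \<le> rho B"
proof (rule ccontr)
  assume "\<not> s \<le> rho B"
  obtain i0 where i0: "i0 < N" "0 < x $ i0"
    using nonneg_vec_nonzero_pos_index[OF x] .
  then have N: "0 < N"
    by simp
  define r where "r = (rho B + s) / 2"
  have r: "rho B < r" "r < s" "0 < r"
    using \<open>\<not> s \<le> rho B\<close> rho_nonneg[OF B(1) N] by (auto simp: r_def)
  obtain C where C: "\<And>k i j. i < N \<Longrightarrow> j < N \<Longrightarrow> \<bar>(B ^\<^sub>m k) $$ (i, j)\<bar> \<le> C * r ^ k"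
    using pow_mat_index_bound[OF B(1) N r(1)] by blast
  define X where "X = (\<Sum>j<N. x $ j)"
  have "s ^ k * x $ i0 \<le> r ^ k * (C * X)" for k
  proof -
    have "s ^ k * x $ i0 \<le> (B ^\<^sub>m k *\<^sub>v x) $ i0"
      using le_vec_index[OF subeigenvector_pow_mat[OF B x(1) _ Bx, of k]] r i0 B x by simp
    also have "\<dots> = (\<Sum>j<N. (B ^\<^sub>m k) $$ (i0, j) * x $ j)"
      using mult_mat_vec_index_sum[of "B ^\<^sub>m k" N N x i0] B x i0 by simp
    also have "\<dots> \<le> (\<Sum>j<N. C * r ^ k * x $ j)"
      using C[OF i0(1)] nonneg_vec_index[OF x(2)]
      by (intro sum_mono mult_right_mono) (auto simp: abs_le_iff)
    also have "\<dots> = r ^ k * (C * X)"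
      by (simp add: X_def sum_distrib_left ac_simps)
    finally show ?thesis .
  qed
  then have bounded: "(s / r) ^ k * x $ i0 \<le> C * X" for k
    using r(3) by (simp add: power_divide divide_le_eq ac_simps)
  obtain k where "C * X / x $ i0 < (s / r) ^ k"
    using real_arch_pow[of "s / r" "C * X / x $ i0"] r by auto
  then show False
    using bounded[of k] i0(2) by (simp add: divide_less_eq)
qed

lemma solution_if_rho_less_1:
  fixes B :: "real mat"
  assumes B: "B \<in> carrier_mat N N" and rho: "rho B < 1" and f: "f \<in> carrier_vec N"
  obtains x where "x \<in> carrier_vec N" "x = f + B *\<^sub>v x"
proof -
  have "\<not> eigenvalue (map_mat complex_of_real B) 1"
    using eigenvalue_le_rho[OF B] rho by fastforce
  moreover have "char_matrix (map_mat complex_of_real B) 1 = map_mat complex_of_real (B - 1\<^sub>m N)"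
    using B by (auto simp: char_matrix_def)
  ultimately have "det (B - 1\<^sub>m N) \<noteq> 0"
    using eigenvalue_det[of "map_mat complex_of_real B" N 1] B by (simp add: of_real_hom.hom_det)
  then have "B - 1\<^sub>m N \<in> Units (ring_mat TYPE(real) N undefined)"
    using B by (intro det_non_zero_imp_unit) auto
  then obtain Y where Y: "Y \<in> carrier_mat N N" "(B - 1\<^sub>m N) * Y = 1\<^sub>m N"
    unfolding Units_def ring_mat_def by auto
  define x where "x = Y *\<^sub>v (- f)"
  have x: "x \<in> carrier_vec N"
    using Y f by (simp add: x_def)
  have "B *\<^sub>v x - x = (B - 1\<^sub>m N) *\<^sub>v x"
    using B x by (simp add: minus_mult_distrib_mat_vec)
  also have "\<dots> = ((B - 1\<^sub>m N) * Y) *\<^sub>v (- f)"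
    unfolding x_def by (rule assoc_mult_mat_vec[symmetric]) (use B Y(1) f in auto)
  also have "\<dots> = - f"
    using Y f by simp
  finally have fixpoint_eq: "B *\<^sub>v x - x = - f" .
  have "x $ i = f $ i + (B *\<^sub>v x) $ i" if "i < N" for i
  proof -
    have "(B *\<^sub>v x - x) $ i = (- f) $ i"
      by (simp only: fixpoint_eq)
    then show ?thesis
      using that B x f by simp
  qed
  then have "x = f + B *\<^sub>v x"
    using B x f by (intro eq_vecI) auto
  with x show thesis
    by (rule that)
qed

lemma nonneg_solution_if_rho_less_1:
  fixes B :: "real mat"
  assumes B: "B \<in> carrier_mat N N" "0\<^sub>m N N \<le> B" and rho: "rho B < 1"
    and f: "f \<in> carrier_vec N" "0\<^sub>v N \<le> f"
  obtains x where "x \<in> carrier_vec N" "x = f + B *\<^sub>v x" "0\<^sub>v N \<le> x"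
proof -
  obtain x where x: "x \<in> carrier_vec N" and fixpoint: "x = f + B *\<^sub>v x"
    using solution_if_rho_less_1[OF B(1) rho f(1)] .
  \<comment> \<open>The negative part of \<open>x\<close> is a subeigenvector of \<open>B\<close> for the value 1, so it vanishes.\<close>
  define y where "y = map_vec (\<lambda>a. max (- a) 0) x"
  have y: "y \<in> carrier_vec N" "0\<^sub>v N \<le> y"
    using x by (auto simp: y_def less_eq_vec_def)
  have "1 \<cdot>\<^sub>v y \<le> B *\<^sub>v y"
  proof (rule le_vecI)
    fix i assume i: "i < N"
    have "- (B *\<^sub>v x) $ i = (\<Sum>j<N. B $$ (i, j) * (- x $ j))"
      using mult_mat_vec_index_sum[OF B(1) x i] by (simp add: sum_negf)
    also have "\<dots> \<le> (\<Sum>j<N. B $$ (i, j) * y $ j)"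
      using nonneg_mat_index[OF B(2) i] x by (intro sum_mono mult_left_mono) (auto simp: y_def)
    also have "\<dots> = (B *\<^sub>v y) $ i"
      using mult_mat_vec_index_sum[OF B(1) y(1) i] by simp
    finally have "- (B *\<^sub>v x) $ i \<le> (B *\<^sub>v y) $ i" .
    moreover have "x $ i = f $ i + (B *\<^sub>v x) $ i" "0 \<le> f $ i" "0 \<le> (B *\<^sub>v y) $ i"
      using fixpoint[THEN arg_cong[where f = "\<lambda>v. v $ i"]] B f y i
        nonneg_vec_index[OF mult_mat_vec_nonneg[OF B y]] nonneg_vec_index[OF f(2)] by auto
    ultimately show "(1 \<cdot>\<^sub>v y) $ i \<le> (B *\<^sub>v y) $ i"
      using i x by (simp add: y_def)
  qed (use B y in auto)
  then have "y = 0\<^sub>v N"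
    using subeigenvector_le_rho[OF B y] rho by (metis linorder_not_le)
  then have "0 \<le> x $ i" if "i < N" for i
  proof -
    have "y $ i = 0"
      using \<open>y = 0\<^sub>v N\<close> that by simp
    then show ?thesis
      using x that by (simp add: y_def max_def split: if_splits)
  qed
  then have "0\<^sub>v N \<le> x"
    using x by (intro le_vecI) auto
  with x fixpoint show thesis
    by (rule that)
qed

lemma subeigenvector_resolvent:
  fixes T :: "real mat"
  assumes T: "T \<in> carrier_mat N N" "0\<^sub>m N N \<le> T"
    and resolvent_nonneg: "\<And>x. x \<in> carrier_vec N \<Longrightarrow> 0\<^sub>v N \<le> x - T *\<^sub>v x \<Longrightarrow> 0\<^sub>v N \<le> x"
    and w: "w \<in> carrier_vec N" and z: "w - T *\<^sub>v w = z" "0\<^sub>v N \<le> z" "s \<cdot>\<^sub>v z \<le> T *\<^sub>v z"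
  shows "0\<^sub>v N \<le> w" "z \<le> w" "s \<cdot>\<^sub>v w \<le> T *\<^sub>v w"
proof -
  show w0: "0\<^sub>v N \<le> w"
    using resolvent_nonneg[OF w] z by simp
  have "0\<^sub>v N \<le> T *\<^sub>v w"
    using mult_mat_vec_nonneg[OF T w w0] .
  then show "z \<le> w"
    using z(1) T w by (auto simp: less_eq_vec_def)
  define g where "g = T *\<^sub>v w - s \<cdot>\<^sub>v w"
  have g: "g \<in> carrier_vec N"
    using T w by (simp add: g_def)
  have "g - T *\<^sub>v g = T *\<^sub>v z - s \<cdot>\<^sub>v z"
    unfolding g_def z(1)[symmetric] using T w
    by (intro eq_vecI) (simp_all add: mult_minus_distrib_mat_vec[of T N N] mult_mat_vec[of T N N]
        algebra_simps del: index_mult_mat_vec)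
  moreover have "0\<^sub>v N \<le> T *\<^sub>v z - s \<cdot>\<^sub>v z"
    using z(3) T unfolding z(1)[symmetric] using w by (auto simp: less_eq_vec_def)
  ultimately have "0\<^sub>v N \<le> g"
    using resolvent_nonneg[OF g] by simp
  then show "s \<cdot>\<^sub>v w \<le> T *\<^sub>v w"
    using T w by (auto simp: g_def less_eq_vec_def)
qed

section \<open>Block companion matrices\<close>

abbreviation block_companion :: "nat \<Rightarrow> 'a :: semiring_1 mat \<Rightarrow> 'a mat \<Rightarrow> 'a mat" where
  "block_companion n H K \<equiv> four_block_mat H K (1\<^sub>m n) (0\<^sub>m n n)"

lemma block_companion_mult_vec:
  assumes "H \<in> carrier_mat n n" "K \<in> carrier_mat n n" "a \<in> carrier_vec n" "b \<in> carrier_vec n"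
  shows "block_companion n H K *\<^sub>v (a @\<^sub>v b) = (H *\<^sub>v a + K *\<^sub>v b) @\<^sub>v a"
proof -
  have "block_companion n H K *\<^sub>v (a @\<^sub>v b) = (H *\<^sub>v a + K *\<^sub>v b) @\<^sub>v (1\<^sub>m n *\<^sub>v a + 0\<^sub>m n n *\<^sub>v b)"
    using assms by (intro four_block_mat_mult_vec) auto
  also have "1\<^sub>m n *\<^sub>v a + 0\<^sub>m n n *\<^sub>v b = a"
    using assms by auto
  finally show ?thesis .
qed

lemma block_companion_resolvent_mult_vec:
  fixes H K :: "'a :: comm_ring_1 mat"
  assumes "H \<in> carrier_mat n n" "K \<in> carrier_mat n n" "a \<in> carrier_vec n" "b \<in> carrier_vec n"
  shows "(a @\<^sub>v b) - block_companion n H K *\<^sub>v (a @\<^sub>v b) = (a - H *\<^sub>v a - K *\<^sub>v b) @\<^sub>v (b - a)"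
proof -
  have "a - (H *\<^sub>v a + K *\<^sub>v b) = a - H *\<^sub>v a - K *\<^sub>v b"
    using assms by (intro eq_vecI) (auto simp: algebra_simps)
  with assms show ?thesis
    by (simp add: block_companion_mult_vec append_vec_minus[of _ n])
qed

lemma block_companion_resolvent_nonneg_iff:
  fixes H K :: "real mat"
  assumes "H \<in> carrier_mat n n" "K \<in> carrier_mat n n" "w1 \<in> carrier_vec n" "w2 \<in> carrier_vec n"
  shows "0\<^sub>v (n + n) \<le> (w1 @\<^sub>v w2) - block_companion n H K *\<^sub>v (w1 @\<^sub>v w2)
    \<longleftrightarrow> 0\<^sub>v n \<le> w1 - H *\<^sub>v w1 - K *\<^sub>v w2 \<and> w1 \<le> w2"
proof -
  have "0\<^sub>v n \<le> w2 - w1 \<longleftrightarrow> w1 \<le> w2"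
    using assms by (auto simp: less_eq_vec_def)
  with assms show ?thesis
    by (simp add: block_companion_resolvent_mult_vec append_vec_nonneg_iff[of _ n])
qed

lemma block_companion_nonneg:
  fixes H K :: "real mat"
  assumes "H \<in> carrier_mat n n" "K \<in> carrier_mat n n" "0\<^sub>m n n \<le> H" "0\<^sub>m n n \<le> K"
  shows "0\<^sub>m (n + n) (n + n) \<le> block_companion n H K"
  using assms nonneg_mat_index[OF assms(3)] nonneg_mat_index[OF assms(4)]
  by (auto simp: less_eq_mat_def index_mat_four_block)

lemma block_companion_eigenvalue_abs:
  fixes H K :: "real mat"
  assumes H: "H \<in> carrier_mat n n" "0\<^sub>m n n \<le> H" and K: "K \<in> carrier_mat n n" "0\<^sub>m n n \<le> K"
    and l: "eigenvalue (map_mat complex_of_real (block_companion n H K)) l"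
  obtains y where "y \<in> carrier_vec n" "0\<^sub>v n \<le> y" "y \<noteq> 0\<^sub>v n"
    "cmod l ^ 2 \<cdot>\<^sub>v y \<le> cmod l \<cdot>\<^sub>v (H *\<^sub>v y) + K *\<^sub>v y"
proof -
  let ?H = "map_mat complex_of_real H" and ?K = "map_mat complex_of_real K"
  have cH: "?H \<in> carrier_mat n n" and cK: "?K \<in> carrier_mat n n"
    using H K by auto
  have "map_mat complex_of_real (block_companion n H K) = block_companion n ?H ?K"
    using H K by (auto simp: map_four_block_mat)
  with l obtain v where v: "v \<in> carrier_vec (n + n)" "v \<noteq> 0\<^sub>v (n + n)"
    and ev: "block_companion n ?H ?K *\<^sub>v v = l \<cdot>\<^sub>v v"
    using H K unfolding eigenvalue_def eigenvector_def by auto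
  define p where "p = vec_first v n"
  define q where "q = vec_last v n"
  have p: "p \<in> carrier_vec n" and q: "q \<in> carrier_vec n" and v_split: "v = p @\<^sub>v q"
    using v(1) by (auto simp: p_def q_def)
  have "(?H *\<^sub>v p + ?K *\<^sub>v q) @\<^sub>v p = (l \<cdot>\<^sub>v p) @\<^sub>v (l \<cdot>\<^sub>v q)"
    using ev block_companion_mult_vec[OF cH cK p q] unfolding v_split
    by (metis index_smult_vec(2) smult_append_vec)
  then have top: "?H *\<^sub>v p + ?K *\<^sub>v q = l \<cdot>\<^sub>v p" and bottom: "p = l \<cdot>\<^sub>v q"
    using cH cK p q by (subst (asm) append_vec_eq; auto)+
  have "q \<noteq> 0\<^sub>v n"
    using v(2) bottom unfolding v_split by auto
  have "cmod l ^ 2 * cmod (q $ i) \<le> cmod l * (H *\<^sub>v map_vec cmod q) $ i + (K *\<^sub>v map_vec cmod q) $ i"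
    if i: "i < n" for i
  proof -
    have "cmod l ^ 2 * cmod (q $ i) = cmod (l * (?H *\<^sub>v q) $ i + (?K *\<^sub>v q) $ i)"
      using arg_cong[OF top, of "\<lambda>w. w $ i"] cH cK q i
      by (simp add: bottom mult_mat_vec norm_mult power2_eq_square del: index_mult_mat_vec)
    also have "\<dots> \<le> cmod l * cmod ((?H *\<^sub>v q) $ i) + cmod ((?K *\<^sub>v q) $ i)"
      by (metis norm_mult norm_triangle_ineq)
    also have "\<dots> \<le> cmod l * (H *\<^sub>v map_vec cmod q) $ i + (K *\<^sub>v map_vec cmod q) $ i"
      using norm_mult_mat_vec_le[OF H q i] norm_mult_mat_vec_le[OF K q i]
      by (intro add_mono mult_left_mono) auto
    finally show ?thesis .
  qed
  then have "cmod l ^ 2 \<cdot>\<^sub>v map_vec cmod q \<le> cmod l \<cdot>\<^sub>v (H *\<^sub>v map_vec cmod q) + K *\<^sub>v map_vec cmod q"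
    using H K q by (intro le_vecI[of _ n]) auto
  with map_vec_cmod_nonneg[OF q] map_vec_cmod_nonzero[OF q \<open>q \<noteq> 0\<^sub>v n\<close>] q show thesis
    by (intro that) auto
qed

lemma block_companion_subeigenvector_le_rho:
  fixes H K :: "real mat"
  assumes H: "H \<in> carrier_mat n n" "0\<^sub>m n n \<le> H" and K: "K \<in> carrier_mat n n" "0\<^sub>m n n \<le> K"
    and y: "y \<in> carrier_vec n" "0\<^sub>v n \<le> y" "y \<noteq> 0\<^sub>v n"
    and t: "0 \<le> t" and sub: "t ^ 2 \<cdot>\<^sub>v y \<le> t \<cdot>\<^sub>v (H *\<^sub>v y) + K *\<^sub>v y"
  shows "t \<le> rho (block_companion n H K)"
proof (rule subeigenvector_le_rho)
  let ?w = "(t \<cdot>\<^sub>v y) @\<^sub>v y"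
  show "block_companion n H K \<in> carrier_mat (n + n) (n + n)"
    using H K by auto
  show "0\<^sub>m (n + n) (n + n) \<le> block_companion n H K"
    using block_companion_nonneg[OF H(1) K(1) H(2) K(2)] .
  show "?w \<in> carrier_vec (n + n)"
    using y by simp
  show "0\<^sub>v (n + n) \<le> ?w"
    using y t by (simp add: append_vec_nonneg_iff[of _ n] less_eq_vec_def)
  show "?w \<noteq> 0\<^sub>v (n + n)"
    using y by (simp add: append_vec_eq_zero_iff[of _ n _ n])
  have "block_companion n H K *\<^sub>v ?w = (t \<cdot>\<^sub>v (H *\<^sub>v y) + K *\<^sub>v y) @\<^sub>v (t \<cdot>\<^sub>v y)"
    using H K y by (simp add: block_companion_mult_vec mult_mat_vec)
  moreover have "t \<cdot>\<^sub>v ?w = (t ^ 2 \<cdot>\<^sub>v y) @\<^sub>v (t \<cdot>\<^sub>v y)"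
    by (simp add: smult_append_vec smult_smult_assoc power2_eq_square)
  ultimately show "t \<cdot>\<^sub>v ?w \<le> block_companion n H K *\<^sub>v ?w"
    using sub y H K by (simp add: append_vec_le[of _ n])
qed

lemma mult_add_le_scaled:
  fixes a b s t :: real
  assumes "0 < t" "t \<le> s" "0 \<le> a" "0 \<le> b"
  shows "s * a + b \<le> (s / t) ^ 2 * (t * a + b)"
proof -
  have "1 \<le> s / t"
    using assms by simp
  then have ratio: "s / t \<le> (s / t) ^ 2" "1 \<le> (s / t) ^ 2"
    using power_increasing[of 1 2 "s / t"] one_le_power[of "s / t" 2] by simp_all
  have "s * a = (s / t) * (t * a)"
    using assms by simp
  also have "\<dots> \<le> (s / t) ^ 2 * (t * a)"
    using ratio(1) assms by (intro mult_right_mono) auto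
  finally show ?thesis
    using mult_right_mono[OF ratio(2) assms(4)] by (simp add: distrib_left)
qed

lemma rho_block_companion_less:
  fixes H K :: "real mat"
  assumes H: "H \<in> carrier_mat n n" "0\<^sub>m n n \<le> H" and K: "K \<in> carrier_mat n n" "0\<^sub>m n n \<le> K"
    and u: "u \<in> carrier_vec n" "\<And>i. i < n \<Longrightarrow> 0 < u $ i" and n: "0 < n" and t: "0 < t"
    and strict: "\<And>i. i < n \<Longrightarrow> t * (H *\<^sub>v u) $ i + (K *\<^sub>v u) $ i < t ^ 2 * u $ i"
  shows "rho (block_companion n H K) < t"
proof (rule ccontr)
  assume "\<not> rho (block_companion n H K) < t"
  obtain l where l: "eigenvalue (map_mat complex_of_real (block_companion n H K)) l"
    and "cmod l = rho (block_companion n H K)"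
    using rho_eigenvalue[of "block_companion n H K" "n + n"] H K n by auto
  with \<open>\<not> rho (block_companion n H K) < t\<close> have s: "t \<le> cmod l"
    by simp
  obtain y where y: "y \<in> carrier_vec n" "0\<^sub>v n \<le> y" "y \<noteq> 0\<^sub>v n"
    and sub: "cmod l ^ 2 \<cdot>\<^sub>v y \<le> cmod l \<cdot>\<^sub>v (H *\<^sub>v y) + K *\<^sub>v y"
    using block_companion_eigenvalue_abs[OF H K l] .
  \<comment> \<open>Compare \<open>y\<close> with the smallest multiple of \<open>u\<close> above it, at an index where they touch.\<close>
  obtain m i0 where i0: "i0 < n" and y_le: "y \<le> m \<cdot>\<^sub>v u" and y_i0: "y $ i0 = m * u $ i0"
    using max_ratio_index[OF y(1) u n] .
  obtain j where j: "j < n" "0 < y $ j"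
    using nonneg_vec_nonzero_pos_index[OF y] .
  have "y $ j \<le> m * u $ j"
    using le_vec_index[OF y_le, of j] j u(1) by simp
  then have m: "0 < m"
    using j(2) u(2)[OF j(1)] mult_nonpos_nonneg[of m "u $ j"] by linarith
  let ?s = "cmod l" and ?a = "(H *\<^sub>v u) $ i0" and ?b = "(K *\<^sub>v u) $ i0"
  have "0\<^sub>v n \<le> u"
    using u by (intro le_vecI[of _ n]) (auto simp: less_imp_le)
  then have ab: "0 \<le> ?a" "0 \<le> ?b"
    using nonneg_vec_index[OF mult_mat_vec_nonneg[OF H(1,2) u(1)] i0]
      nonneg_vec_index[OF mult_mat_vec_nonneg[OF K(1,2) u(1)] i0] by simp_all
  have Hy: "(H *\<^sub>v y) $ i0 \<le> m * ?a"
    using le_vec_index[OF mult_mat_vec_mono[OF H(1,2) y(1) _ y_le], of i0] H u i0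
    by (simp add: mult_mat_vec del: index_mult_mat_vec)
  have Ky: "(K *\<^sub>v y) $ i0 \<le> m * ?b"
    using le_vec_index[OF mult_mat_vec_mono[OF K(1,2) y(1) _ y_le], of i0] K u i0
    by (simp add: mult_mat_vec del: index_mult_mat_vec)
  have "?s ^ 2 * y $ i0 \<le> ?s * (H *\<^sub>v y) $ i0 + (K *\<^sub>v y) $ i0"
    using le_vec_index[OF sub, of i0] i0 H K y by (simp del: index_mult_mat_vec)
  also have "\<dots> \<le> ?s * (m * ?a) + m * ?b"
    using mult_left_mono[OF Hy norm_ge_zero[of l]] Ky by linarith
  also have "\<dots> = m * (?s * ?a + ?b)"
    by (simp add: algebra_simps)
  also have "\<dots> \<le> m * ((?s / t) ^ 2 * (t * ?a + ?b))"
    using mult_add_le_scaled[OF t s ab] m by simp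
  also have "\<dots> < m * ((?s / t) ^ 2 * (t ^ 2 * u $ i0))"
    using strict[OF i0] m s t by (intro mult_strict_left_mono) auto
  also have "\<dots> = ?s ^ 2 * y $ i0"
    using t y_i0 by (simp add: power_divide)
  finally show False
    by simp
qed

lemma scaled_pencil_mult_vec:
  fixes H K :: "real mat"
  assumes "H \<in> carrier_mat n n" "K \<in> carrier_mat n n" "v \<in> carrier_vec n" "0 < t"
  shows "t ^ 2 \<cdot>\<^sub>v (((1 / t ^ 2) \<cdot>\<^sub>m (t \<cdot>\<^sub>m H + K)) *\<^sub>v v) = t \<cdot>\<^sub>v (H *\<^sub>v v) + K *\<^sub>v v"
proof -
  have "((1 / t ^ 2) \<cdot>\<^sub>m (t \<cdot>\<^sub>m H + K)) *\<^sub>v v = (1 / t ^ 2) \<cdot>\<^sub>v (t \<cdot>\<^sub>v (H *\<^sub>v v) + K *\<^sub>v v)"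
    using assms by (simp add: smult_mult_mat_vec[of _ n n] add_mult_distrib_mat_vec[of _ n n])
  then show ?thesis
    using assms by (simp add: smult_smult_assoc)
qed

text \<open>The matrix \<open>(t H + K) / t\<^sup>2\<close> has the eigenvalue 1 exactly when the block companion
  matrix has the eigenvalue \<open>t\<close>.\<close>

lemma rho_scaled_pencil_less_1:
  fixes H K :: "real mat"
  assumes H: "H \<in> carrier_mat n n" "0\<^sub>m n n \<le> H" and K: "K \<in> carrier_mat n n" "0\<^sub>m n n \<le> K"
    and n: "0 < n" and t: "0 < t" and rho: "rho (block_companion n H K) < t"
  shows "rho ((1 / t ^ 2) \<cdot>\<^sub>m (t \<cdot>\<^sub>m H + K)) < 1"
proof -
  define B where "B = (1 / t ^ 2) \<cdot>\<^sub>m (t \<cdot>\<^sub>m H + K)"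
  have B: "B \<in> carrier_mat n n" "0\<^sub>m n n \<le> B"
    using H K t nonneg_mat_index[OF H(2)] nonneg_mat_index[OF K(2)]
    by (auto simp: B_def less_eq_mat_def)
  have "rho B < 1"
  proof (rule ccontr)
    assume "\<not> rho B < 1"
    obtain y where y: "y \<in> carrier_vec n" "0\<^sub>v n \<le> y" "y \<noteq> 0\<^sub>v n" and sub: "rho B \<cdot>\<^sub>v y \<le> B *\<^sub>v y"
      using rho_subeigenvector[OF B n] .
    have "y \<le> B *\<^sub>v y"
    proof (rule le_vecI[of _ n])
      fix i assume i: "i < n"
      have "y $ i \<le> rho B * y $ i"
        using mult_right_mono[of 1 "rho B" "y $ i"] \<open>\<not> rho B < 1\<close> nonneg_vec_index[OF y(2) i]
        by simp
      also have "\<dots> \<le> (B *\<^sub>v y) $ i"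
        using le_vec_index[OF sub, of i] i B y by simp
      finally show "y $ i \<le> (B *\<^sub>v y) $ i" .
    qed (use y B in auto)
    then have "t ^ 2 \<cdot>\<^sub>v y \<le> t ^ 2 \<cdot>\<^sub>v (B *\<^sub>v y)"
      by (auto simp: less_eq_vec_def intro: mult_left_mono)
    then have "t \<le> rho (block_companion n H K)"
      using block_companion_subeigenvector_le_rho[OF H K y]
        scaled_pencil_mult_vec[OF H(1) K(1) y(1) t, folded B_def] t
      by simp
    with rho show False
      by simp
  qed
  then show ?thesis
    unfolding B_def .
qed

lemma block_companion_subsolution:
  fixes H K :: "real mat"
  assumes H: "H \<in> carrier_mat n n" "0\<^sub>m n n \<le> H" and K: "K \<in> carrier_mat n n" "0\<^sub>m n n \<le> K"
    and n: "0 < n" and t: "0 < t" and rho: "rho (block_companion n H K) < t"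
    and f: "f \<in> carrier_vec n" "0\<^sub>v n \<le> f"
  obtains x where "x \<in> carrier_vec n" "0\<^sub>v n \<le> x"
    "t ^ 2 \<cdot>\<^sub>v x = t \<cdot>\<^sub>v (H *\<^sub>v x) + K *\<^sub>v x + t ^ 2 \<cdot>\<^sub>v f"
proof -
  define B where "B = (1 / t ^ 2) \<cdot>\<^sub>m (t \<cdot>\<^sub>m H + K)"
  have B: "B \<in> carrier_mat n n" "0\<^sub>m n n \<le> B"
    using H K t nonneg_mat_index[OF H(2)] nonneg_mat_index[OF K(2)]
    by (auto simp: B_def less_eq_mat_def)
  obtain x where x: "x \<in> carrier_vec n" "x = f + B *\<^sub>v x" "0\<^sub>v n \<le> x"
    using nonneg_solution_if_rho_less_1[OF B rho_scaled_pencil_less_1[OF H K n t rho, folded B_def]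
        f]
    by blast
  have "t ^ 2 \<cdot>\<^sub>v x = t ^ 2 \<cdot>\<^sub>v (B *\<^sub>v x) + t ^ 2 \<cdot>\<^sub>v f"
    using x(1) B f by (subst x(2)) (intro eq_vecI; simp add: algebra_simps)
  with scaled_pencil_mult_vec[OF H(1) K(1) x(1) t, folded B_def] x show thesis
    by (intro that) auto
qed

section \<open>Double splittings\<close>

lemma double_splittingD:
  assumes "double_splitting n A P R S iP"
  shows "A \<in> carrier_mat n n" "P \<in> carrier_mat n n" "R \<in> carrier_mat n n" "S \<in> carrier_mat n n"
    "iP \<in> carrier_mat n n" "P * iP = 1\<^sub>m n" "iP * P = 1\<^sub>m n" "A = P - R + S"
  using assms unfolding double_splitting_def is_inv_def by auto

lemma double_regular_splittingD:
  assumes "double_regular_splitting n A P R S iP"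
  shows "double_splitting n A P R S iP" "0\<^sub>m n n \<le> iP" "0\<^sub>m n n \<le> R" "0\<^sub>m n n \<le> - S"
    "0\<^sub>m n n \<le> iP * R" "0\<^sub>m n n \<le> - (iP * S)"
proof -
  show sp: "double_splitting n A P R S iP" and iP: "0\<^sub>m n n \<le> iP" and R: "0\<^sub>m n n \<le> R"
    using assms unfolding double_regular_splitting_def by auto
  note c = double_splittingD[OF sp]
  show S: "0\<^sub>m n n \<le> - S"
    using assms uminus_mat_nonneg[OF c(4)] unfolding double_regular_splitting_def by blast
  show "0\<^sub>m n n \<le> iP * R"
    using mult_mat_nonneg[OF c(5) iP c(3) R] .
  show "0\<^sub>m n n \<le> - (iP * S)"
    using mult_mat_nonneg[OF c(5) iP _ S] c by simp
qed

lemma double_weak_regular_splittingD: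
  assumes "double_weak_regular_splitting n A P R S iP"
  shows "double_splitting n A P R S iP" "0\<^sub>m n n \<le> iP" "0\<^sub>m n n \<le> iP * R" "0\<^sub>m n n \<le> - (iP * S)"
proof -
  show sp: "double_splitting n A P R S iP" "0\<^sub>m n n \<le> iP" "0\<^sub>m n n \<le> iP * R"
    using assms unfolding double_weak_regular_splitting_def by auto
  have "iP * S \<in> carrier_mat n n"
    using double_splittingD(4,5)[OF sp(1)] by simp
  then show "0\<^sub>m n n \<le> - (iP * S)"
    using assms uminus_mat_nonneg unfolding double_weak_regular_splitting_def by blast
qed

lemma double_splitting_mult_vec:
  assumes sp: "double_splitting n A P R S iP" and a: "a \<in> carrier_vec n"
  shows "A *\<^sub>v a = P *\<^sub>v a - R *\<^sub>v a + S *\<^sub>v a"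
proof -
  note c = double_splittingD[OF sp]
  have "A *\<^sub>v a = (P - R) *\<^sub>v a + S *\<^sub>v a"
    unfolding c(8) by (rule add_mult_distrib_mat_vec) (use c a in auto)
  also have "(P - R) *\<^sub>v a = P *\<^sub>v a - R *\<^sub>v a"
    by (rule minus_mult_distrib_mat_vec) (use c a in auto)
  finally show ?thesis .
qed

lemma double_splitting_inverse_mult_vec:
  assumes sp: "double_splitting n A P R S iP" and a: "a \<in> carrier_vec n"
  shows "P *\<^sub>v (iP *\<^sub>v a) = a" "iP *\<^sub>v (P *\<^sub>v a) = a"
    "P *\<^sub>v ((iP * R) *\<^sub>v a) = R *\<^sub>v a" "P *\<^sub>v ((- (iP * S)) *\<^sub>v a) = - (S *\<^sub>v a)"
proof -
  note c = double_splittingD[OF sp]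
  have P_iP: "P *\<^sub>v (iP *\<^sub>v b) = b" if "b \<in> carrier_vec n" for b
    using assoc_mult_mat_vec[OF c(2) c(5) that] c(6) that by simp
  show "P *\<^sub>v (iP *\<^sub>v a) = a"
    using P_iP[OF a] .
  show "iP *\<^sub>v (P *\<^sub>v a) = a"
    using assoc_mult_mat_vec[OF c(5) c(2) a] c(7) a by simp
  show "P *\<^sub>v ((iP * R) *\<^sub>v a) = R *\<^sub>v a"
    using P_iP[of "R *\<^sub>v a"] c a by simp
  show "P *\<^sub>v ((- (iP * S)) *\<^sub>v a) = - (S *\<^sub>v a)"
    using P_iP[of "S *\<^sub>v a"] c a by (simp add: mult_mat_vec_uminus[of P n n])
qed

lemma double_splitting_K_mult_vec:
  assumes sp: "double_splitting n A P R S iP" and a: "a \<in> carrier_vec n"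
  shows "(- (iP * S)) *\<^sub>v a = a - (iP * R) *\<^sub>v a - iP *\<^sub>v (A *\<^sub>v a)"
proof -
  note c = double_splittingD[OF sp]
  have "iP *\<^sub>v (A *\<^sub>v a) = iP *\<^sub>v (P *\<^sub>v a) - iP *\<^sub>v (R *\<^sub>v a) + iP *\<^sub>v (S *\<^sub>v a)"
    using c(2-5) a unfolding double_splitting_mult_vec[OF sp a]
    by (simp add: mult_add_distrib_mat_vec[of _ n n] mult_minus_distrib_mat_vec[of _ n n])
  then show ?thesis
    using c a double_splitting_inverse_mult_vec(2)[OF sp a] by (intro eq_vecI) auto
qed

lemma double_splitting_P_mult_block:
  assumes sp: "double_splitting n A P R S iP" and a: "a \<in> carrier_vec n" and b: "b \<in> carrier_vec n"
  shows "P *\<^sub>v ((iP * R) *\<^sub>v a + (- (iP * S)) *\<^sub>v b) = R *\<^sub>v a - S *\<^sub>v b"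
  using double_splittingD[OF sp] double_splitting_inverse_mult_vec(3,4)[OF sp] a b
  by (intro eq_vecI) (simp_all add: mult_add_distrib_mat_vec[of P n n] del: index_mult_mat_vec)

lemma double_splitting_P_mult_resolvent:
  assumes sp: "double_splitting n A P R S iP" and a: "a \<in> carrier_vec n" and b: "b \<in> carrier_vec n"
  shows "P *\<^sub>v (a - (iP * R) *\<^sub>v a - (- (iP * S)) *\<^sub>v b) = P *\<^sub>v a - R *\<^sub>v a + S *\<^sub>v b"
  using double_splittingD[OF sp] double_splitting_inverse_mult_vec(3,4)[OF sp] a b
  by (intro eq_vecI) (simp_all add: mult_minus_distrib_mat_vec[of P n n] del: index_mult_mat_vec)

lemma double_splitting_resolvent_identity:
  assumes sp: "double_splitting n A P R S iP" and w: "w1 \<in> carrier_vec n" "w2 \<in> carrier_vec n"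
  defines "h \<equiv> w1 - (iP * R) *\<^sub>v w1 - (- (iP * S)) *\<^sub>v w2"
  shows "A *\<^sub>v w1 = A *\<^sub>v h + (R *\<^sub>v h + (- S) *\<^sub>v h + (- S) *\<^sub>v (w2 - w1))"
proof -
  note c = double_splittingD[OF sp]
  have h: "h \<in> carrier_vec n"
    using c w by (simp add: h_def)
  have "P *\<^sub>v h = P *\<^sub>v w1 - R *\<^sub>v w1 + S *\<^sub>v w2"
    unfolding h_def using double_splitting_P_mult_resolvent[OF sp w] .
  then show ?thesis
    using double_splitting_mult_vec[OF sp w(1)] double_splitting_mult_vec[OF sp h] c w h
    by (intro eq_vecI) (simp_all add: mult_minus_distrib_mat_vec[of S n n] del: index_mult_mat_vec)
qed

lemma double_regular_splitting_resolvent_nonneg: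
  assumes A: "monotone_with_inv n A iA" and sp: "double_regular_splitting n A P R S iP"
    and x: "x \<in> carrier_vec (n + n)"
    and hx: "0\<^sub>v (n + n) \<le> x - block_companion n (iP * R) (- (iP * S)) *\<^sub>v x"
  shows "0\<^sub>v (n + n) \<le> x"
proof -
  note d = double_regular_splittingD[OF sp]
  note c = double_splittingD[OF d(1)]
  have iA: "iA \<in> carrier_mat n n" "iA * A = 1\<^sub>m n" "0\<^sub>m n n \<le> iA"
    using A unfolding monotone_with_inv_def is_inv_def by auto
  define w1 where "w1 = vec_first x n"
  define w2 where "w2 = vec_last x n"
  have w: "w1 \<in> carrier_vec n" "w2 \<in> carrier_vec n" and x_split: "x = w1 @\<^sub>v w2"
    using x by (auto simp: w1_def w2_def)
  define h where "h = w1 - (iP * R) *\<^sub>v w1 - (- (iP * S)) *\<^sub>v w2"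
  define e where "e = R *\<^sub>v h + (- S) *\<^sub>v h + (- S) *\<^sub>v (w2 - w1)"
  have h: "h \<in> carrier_vec n" and e: "e \<in> carrier_vec n"
    using c w by (auto simp: h_def e_def)
  have h0: "0\<^sub>v n \<le> h" and "w1 \<le> w2"
    using hx block_companion_resolvent_nonneg_iff[of "iP * R" n "- (iP * S)" w1 w2] c w
    unfolding x_split h_def by auto
  then have "0\<^sub>v n \<le> w2 - w1"
    using w by (auto simp: less_eq_vec_def)
  then have e0: "0\<^sub>v n \<le> e"
    using mult_mat_vec_nonneg[OF c(3) d(3) h h0] mult_mat_vec_nonneg[OF _ d(4) h h0]
      mult_mat_vec_nonneg[OF _ d(4) _ \<open>0\<^sub>v n \<le> w2 - w1\<close>] c w h
    unfolding e_def by (intro le_vecI[of _ n])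
      (auto simp: less_eq_vec_def simp del: index_mult_mat_vec uminus_mult_mat_vec)
  have "iA *\<^sub>v (A *\<^sub>v w1) = iA *\<^sub>v (A *\<^sub>v h) + iA *\<^sub>v e"
    using double_splitting_resolvent_identity[OF d(1) w, folded h_def e_def] iA c(1) h e
    by (simp add: mult_add_distrib_mat_vec[of iA n n])
  then have "w1 = h + iA *\<^sub>v e"
    using assoc_mult_mat_vec[OF iA(1) c(1) w(1), symmetric]
      assoc_mult_mat_vec[OF iA(1) c(1) h, symmetric] iA(2) w h
    by simp
  then have w1: "0\<^sub>v n \<le> w1"
    using mult_mat_vec_nonneg[OF iA(1,3) e e0] h0 h e by (auto simp: less_eq_vec_def)
  moreover have "0\<^sub>v n \<le> w2"
    using w1 \<open>w1 \<le> w2\<close> by (rule order_trans)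
  ultimately show ?thesis
    unfolding x_split using w by (simp add: append_vec_nonneg_iff)
qed

lemma double_splitting_block_companion_solve:
  assumes A: "is_inv n A iA" and sp: "double_splitting n A P R S iP"
    and z: "z1 \<in> carrier_vec n" "z2 \<in> carrier_vec n"
  obtains w1 w2 where "w1 \<in> carrier_vec n" "w2 \<in> carrier_vec n"
    "(w1 @\<^sub>v w2) - block_companion n (iP * R) (- (iP * S)) *\<^sub>v (w1 @\<^sub>v w2) = z1 @\<^sub>v z2"
    "A *\<^sub>v w2 = P *\<^sub>v z1 + P *\<^sub>v z2 - R *\<^sub>v z2"
proof -
  note c = double_splittingD[OF sp]
  have iA: "iA \<in> carrier_mat n n" "A * iA = 1\<^sub>m n"
    using A unfolding is_inv_def by auto
  define w1 where "w1 = iA *\<^sub>v (P *\<^sub>v z1 - S *\<^sub>v z2)"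
  have w1: "w1 \<in> carrier_vec n"
    using iA c z by (simp add: w1_def)
  have Aw1: "A *\<^sub>v w1 = P *\<^sub>v z1 - S *\<^sub>v z2"
    using assoc_mult_mat_vec[OF c(1) iA(1), of "P *\<^sub>v z1 - S *\<^sub>v z2", symmetric] iA(2) c z
    by (simp add: w1_def)
  have "P *\<^sub>v (w1 - (iP * R) *\<^sub>v w1 - (- (iP * S)) *\<^sub>v (w1 + z2)) = P *\<^sub>v w1 - R *\<^sub>v w1 + S *\<^sub>v (w1 + z2)"
    using double_splitting_P_mult_resolvent[OF sp w1, of "w1 + z2"] w1 z by simp
  also have "\<dots> = A *\<^sub>v w1 + S *\<^sub>v z2"
    using double_splitting_mult_vec[OF sp w1] w1 z c(2-5)
    by (intro eq_vecI) (simp_all add: mult_add_distrib_mat_vec[of S n n] del: index_mult_mat_vec)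
  also have "\<dots> = P *\<^sub>v z1"
    unfolding Aw1 using z c(2-5) by (intro eq_vecI) (simp_all del: index_mult_mat_vec)
  finally have "iP *\<^sub>v (P *\<^sub>v (w1 - (iP * R) *\<^sub>v w1 - (- (iP * S)) *\<^sub>v (w1 + z2))) = iP *\<^sub>v (P *\<^sub>v z1)"
    by simp
  then have "w1 - (iP * R) *\<^sub>v w1 - (- (iP * S)) *\<^sub>v (w1 + z2) = z1"
    using double_splitting_inverse_mult_vec(2)[OF sp] w1 z c(2-5) by simp
  moreover have "A *\<^sub>v (w1 + z2) = P *\<^sub>v z1 + P *\<^sub>v z2 - R *\<^sub>v z2"
    unfolding mult_add_distrib_mat_vec[OF c(1) w1 z(2)] Aw1 double_splitting_mult_vec[OF sp z(2)]
    using z c(2-5) by (intro eq_vecI) (simp_all del: index_mult_mat_vec)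
  moreover have "w1 + z2 - w1 = z2"
    using w1 z by (intro eq_vecI) auto
  ultimately show thesis
    using that[OF w1 add_carrier_vec[OF w1 z(2)]] w1 z c(1-5)
    by (simp add: block_companion_resolvent_mult_vec)
qed

lemma double_splitting_resolvent_square:
  assumes iA: "is_inv n A iA" and sp: "double_splitting n A P R S iP"
    and y: "y1 \<in> carrier_vec n" "y2 \<in> carrier_vec n"
  obtains w1 w2 where "w1 \<in> carrier_vec n" "w2 \<in> carrier_vec n"
    "(w1 @\<^sub>v w2) - block_companion n (iP * R) (- (iP * S)) *\<^sub>v (w1 @\<^sub>v w2)
      = block_companion n (iP * R) (- (iP * S)) *\<^sub>v
          (block_companion n (iP * R) (- (iP * S)) *\<^sub>v (y1 @\<^sub>v y2))"
    "A *\<^sub>v w2 = R *\<^sub>v y1 + (- S) *\<^sub>v y1 + (- S) *\<^sub>v y2"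
proof -
  let ?H = "iP * R" and ?K = "- (iP * S)"
  note c = double_splittingD[OF sp]
  have HK: "?H \<in> carrier_mat n n" "?K \<in> carrier_mat n n"
    using c by auto
  define v1 where "v1 = ?H *\<^sub>v y1 + ?K *\<^sub>v y2"
  define z1 where "z1 = ?H *\<^sub>v v1 + ?K *\<^sub>v y1"
  have v1: "v1 \<in> carrier_vec n" and z1: "z1 \<in> carrier_vec n"
    using HK y by (auto simp: v1_def z1_def)
  have TTy: "block_companion n ?H ?K *\<^sub>v (block_companion n ?H ?K *\<^sub>v (y1 @\<^sub>v y2)) = z1 @\<^sub>v v1"
    using HK y v1 by (simp add: block_companion_mult_vec v1_def z1_def)
  obtain w1 w2 where w: "w1 \<in> carrier_vec n" "w2 \<in> carrier_vec n"
    and res: "(w1 @\<^sub>v w2) - block_companion n ?H ?K *\<^sub>v (w1 @\<^sub>v w2) = z1 @\<^sub>v v1"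
    and Aw2: "A *\<^sub>v w2 = P *\<^sub>v z1 + P *\<^sub>v v1 - R *\<^sub>v v1"
    using double_splitting_block_companion_solve[OF iA sp z1 v1] .
  have "P *\<^sub>v z1 = R *\<^sub>v v1 - S *\<^sub>v y1" "P *\<^sub>v v1 = R *\<^sub>v y1 - S *\<^sub>v y2"
    using double_splitting_P_mult_block[OF sp] v1 y by (simp_all add: v1_def z1_def)
  then have "A *\<^sub>v w2 = R *\<^sub>v y1 + (- S) *\<^sub>v y1 + (- S) *\<^sub>v y2"
    unfolding Aw2 using c v1 y by (intro eq_vecI) (simp_all del: index_mult_mat_vec)
  with w res show thesis
    unfolding TTy[symmetric] by (rule that)
qed

lemma double_regular_splitting_subeigenvector:
  assumes A: "monotone_with_inv n A iA" and sp: "double_regular_splitting n A P R S iP"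
    and y: "y \<in> carrier_vec (n + n)" "0\<^sub>v (n + n) \<le> y" "y \<noteq> 0\<^sub>v (n + n)" and s: "0 < s"
    and sub: "s \<cdot>\<^sub>v y \<le> block_companion n (iP * R) (- (iP * S)) *\<^sub>v y"
  obtains w1 w2 where "w1 \<in> carrier_vec n" "w2 \<in> carrier_vec n" "w1 \<le> w2" "0\<^sub>v n \<le> A *\<^sub>v w2"
    "0\<^sub>v (n + n) \<le> w1 @\<^sub>v w2" "w1 @\<^sub>v w2 \<noteq> 0\<^sub>v (n + n)"
    "s \<cdot>\<^sub>v (w1 @\<^sub>v w2) \<le> block_companion n (iP * R) (- (iP * S)) *\<^sub>v (w1 @\<^sub>v w2)"
proof -
  let ?T = "block_companion n (iP * R) (- (iP * S))"
  note d = double_regular_splittingD[OF sp]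
  note c = double_splittingD[OF d(1)]
  have HK: "iP * R \<in> carrier_mat n n" "- (iP * S) \<in> carrier_mat n n"
    using c by auto
  have T: "?T \<in> carrier_mat (n + n) (n + n)" "0\<^sub>m (n + n) (n + n) \<le> ?T"
    using HK block_companion_nonneg[OF HK d(5,6)] by auto
  define y1 where "y1 = vec_first y n"
  define y2 where "y2 = vec_last y n"
  have y12: "y1 \<in> carrier_vec n" "y2 \<in> carrier_vec n" and y_split: "y = y1 @\<^sub>v y2"
    using y(1) by (auto simp: y1_def y2_def)
  have y0: "0\<^sub>v n \<le> y1" "0\<^sub>v n \<le> y2"
    using y(2) y12 unfolding y_split by (simp_all add: append_vec_nonneg_iff)
  \<comment> \<open>Resolving \<open>T\<^sup>2 y\<close> instead of \<open>y\<close> makes \<open>A w2\<close> a nonnegative combination of \<open>y\<close>.\<close>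
  obtain w1 w2 where w: "w1 \<in> carrier_vec n" "w2 \<in> carrier_vec n"
    and res: "(w1 @\<^sub>v w2) - ?T *\<^sub>v (w1 @\<^sub>v w2) = ?T *\<^sub>v (?T *\<^sub>v y)"
    and Aw2: "A *\<^sub>v w2 = R *\<^sub>v y1 + (- S) *\<^sub>v y1 + (- S) *\<^sub>v y2"
    using double_splitting_resolvent_square[of n A iA P R S iP y1 y2] A d(1) y12
    unfolding monotone_with_inv_def y_split by blast
  have Ty0: "0\<^sub>v (n + n) \<le> ?T *\<^sub>v y"
    using mult_mat_vec_nonneg[OF T y(1,2)] .
  have sub2: "s \<cdot>\<^sub>v (?T *\<^sub>v y) \<le> ?T *\<^sub>v (?T *\<^sub>v y)"
    using subeigenvector_mult_mat_vec[OF T y(1) sub] .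
  have TTy0: "0\<^sub>v (n + n) \<le> ?T *\<^sub>v (?T *\<^sub>v y)"
    using mult_mat_vec_nonneg[OF T _ Ty0] T y by simp
  have w_props: "0\<^sub>v (n + n) \<le> w1 @\<^sub>v w2" "?T *\<^sub>v (?T *\<^sub>v y) \<le> w1 @\<^sub>v w2"
    "s \<cdot>\<^sub>v (w1 @\<^sub>v w2) \<le> ?T *\<^sub>v (w1 @\<^sub>v w2)"
    using subeigenvector_resolvent[OF T double_regular_splitting_resolvent_nonneg[OF A sp] _ res
        TTy0 subeigenvector_mult_mat_vec[OF T _ sub2]] T y w
    by auto
  have "w1 \<le> w2"
    using TTy0 block_companion_resolvent_nonneg_iff[OF HK w] unfolding res[symmetric] by simp
  moreover have "0\<^sub>v n \<le> A *\<^sub>v w2"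
    using mult_mat_vec_nonneg[OF c(3) d(3) y12(1) y0(1)] mult_mat_vec_nonneg[OF _ d(4) y12(1) y0(1)]
      mult_mat_vec_nonneg[OF _ d(4) y12(2) y0(2)] c y12 unfolding Aw2
    by (auto simp: less_eq_vec_def simp del: index_mult_mat_vec uminus_mult_mat_vec)
  moreover have "w1 @\<^sub>v w2 \<noteq> 0\<^sub>v (n + n)"
  proof (rule nonzero_if_ge_smult[OF y])
    have "(s * s) \<cdot>\<^sub>v y \<le> s \<cdot>\<^sub>v (?T *\<^sub>v y)"
      using sub s by (auto simp: less_eq_vec_def intro: mult_left_mono)
    also note sub2
    also note w_props(2)
    finally show "(s * s) \<cdot>\<^sub>v y \<le> w1 @\<^sub>v w2" .
  qed (use s in simp)
  ultimately show thesis
    using that[OF w] w_props(1,3) by blast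
qed

lemma double_splittings_block_companion_mult_vec_le:
  assumes sp1: "double_splitting n A P1 R1 S1 iP1" and sp2: "double_splitting n A P2 R2 S2 iP2"
    and iP: "iP1 \<le> iP2" and H: "iP1 * R1 \<le> iP2 * R2"
    and w: "w1 \<in> carrier_vec n" "w2 \<in> carrier_vec n" "w1 \<le> w2" and Aw: "0\<^sub>v n \<le> A *\<^sub>v w2"
  shows "block_companion n (iP2 * R2) (- (iP2 * S2)) *\<^sub>v (w1 @\<^sub>v w2)
    \<le> block_companion n (iP1 * R1) (- (iP1 * S1)) *\<^sub>v (w1 @\<^sub>v w2)"
proof -
  note c1 = double_splittingD[OF sp1] and c2 = double_splittingD[OF sp2]
  have "0\<^sub>v n \<le> w2 - w1"
    using w by (auto simp: less_eq_vec_def)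
  then have Hmono: "(iP1 * R1) *\<^sub>v (w2 - w1) \<le> (iP2 * R2) *\<^sub>v (w2 - w1)"
    using mult_mat_vec_mono_left[of "iP1 * R1" n n "iP2 * R2" "w2 - w1"] H c1 c2 w by simp
  have iPmono: "iP1 *\<^sub>v (A *\<^sub>v w2) \<le> iP2 *\<^sub>v (A *\<^sub>v w2)"
    using mult_mat_vec_mono_left[OF c1(5) c2(5) iP _ Aw] c1(1) w by simp
  have "(iP2 * R2) *\<^sub>v w1 + (- (iP2 * S2)) *\<^sub>v w2 \<le> (iP1 * R1) *\<^sub>v w1 + (- (iP1 * S1)) *\<^sub>v w2"
  proof (rule le_vecI[of _ n])
    fix i assume i: "i < n"
    show "((iP2 * R2) *\<^sub>v w1 + (- (iP2 * S2)) *\<^sub>v w2) $ i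
      \<le> ((iP1 * R1) *\<^sub>v w1 + (- (iP1 * S1)) *\<^sub>v w2) $ i"
      using le_vec_index[OF Hmono, of i] le_vec_index[OF iPmono, of i]
        double_splitting_K_mult_vec[OF sp1 w(2)] double_splitting_K_mult_vec[OF sp2 w(2)] c1 c2 w i
      by (simp add: mult_minus_distrib_mat_vec[of _ n n] del: index_mult_mat_vec)
  qed (use c1 c2 w in auto)
  then show ?thesis
    using c1 c2 w by (simp add: block_companion_mult_vec append_vec_le[of _ n])
qed

lemma double_regular_splitting_mult_vec_nonneg:
  assumes sp: "double_regular_splitting n A P R S iP" and t: "0 < t" "t \<le> 1"
    and x: "x \<in> carrier_vec n" "0\<^sub>v n \<le> x"
    and g: "0\<^sub>v n \<le> t ^ 2 \<cdot>\<^sub>v (P *\<^sub>v x) - t \<cdot>\<^sub>v (R *\<^sub>v x) + S *\<^sub>v x"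
  shows "0\<^sub>v n \<le> A *\<^sub>v x"
proof -
  note d = double_regular_splittingD[OF sp]
  note c = double_splittingD[OF d(1)]
  have "0 \<le> (A *\<^sub>v x) $ i" if i: "i < n" for i
  proof -
    define g where "g = t ^ 2 * (P *\<^sub>v x) $ i - t * (R *\<^sub>v x) $ i + (S *\<^sub>v x) $ i"
    have "0 \<le> g"
      using nonneg_vec_index[OF g i] i c(1-5) x by (simp add: g_def)
    moreover have "0 \<le> (R *\<^sub>v x) $ i" "0 \<le> - ((S *\<^sub>v x) $ i)"
      using nonneg_vec_index[OF mult_mat_vec_nonneg[OF c(3) d(3) x] i]
        nonneg_vec_index[OF mult_mat_vec_nonneg[OF _ d(4) x] i] c(3,4) x i by simp_all
    moreover have "0 \<le> t" "0 \<le> 1 - t" "0 \<le> 1 - t ^ 2"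
      using t by (simp_all add: power_le_one)
    ultimately have "0 \<le> g + t * (1 - t) * (R *\<^sub>v x) $ i + (1 - t ^ 2) * (- ((S *\<^sub>v x) $ i))"
      by (intro add_nonneg_nonneg mult_nonneg_nonneg)
    also have "\<dots> = t ^ 2 * (A *\<^sub>v x) $ i"
    proof -
      have Ax: "(A *\<^sub>v x) $ i = (P *\<^sub>v x) $ i - (R *\<^sub>v x) $ i + (S *\<^sub>v x) $ i"
        unfolding double_splitting_mult_vec[OF d(1) x(1)] using i c(2-4) x by simp
      show ?thesis
        unfolding g_def Ax by (simp add: algebra_simps power2_eq_square del: index_mult_mat_vec)
    qed
    finally show ?thesis
      using t by (simp add: zero_le_mult_iff del: index_mult_mat_vec)
  qed
  then show ?thesis
    using c(1) x by (intro le_vecI[of _ n]) simp_all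
qed

lemma double_weak_regular_splitting_mult_vec_le:
  assumes sp: "double_weak_regular_splitting n A P R S iP" and t: "t \<le> 1"
    and x: "x \<in> carrier_vec n" "0\<^sub>v n \<le> x" "0\<^sub>v n \<le> A *\<^sub>v x"
  shows "t \<cdot>\<^sub>v ((iP * R) *\<^sub>v x) + (- (iP * S)) *\<^sub>v x \<le> x"
proof -
  note d = double_weak_regular_splittingD[OF sp]
  note c = double_splittingD[OF d(1)]
  have "(t \<cdot>\<^sub>v ((iP * R) *\<^sub>v x) + (- (iP * S)) *\<^sub>v x) $ i \<le> x $ i" if i: "i < n" for i
  proof -
    have "0 \<le> ((iP * R) *\<^sub>v x) $ i" "0 \<le> (iP *\<^sub>v (A *\<^sub>v x)) $ i"
      using nonneg_vec_index[OF mult_mat_vec_nonneg[OF _ d(3) x(1,2)] i]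
        nonneg_vec_index[OF mult_mat_vec_nonneg[OF c(5) d(2) _ x(3)] i] c(1-5) x by simp_all
    moreover have "((- (iP * S)) *\<^sub>v x) $ i = x $ i - ((iP * R) *\<^sub>v x) $ i - (iP *\<^sub>v (A *\<^sub>v x)) $ i"
      unfolding double_splitting_K_mult_vec[OF d(1) x(1)] using i c(1-5) x by simp
    moreover have "(t \<cdot>\<^sub>v ((iP * R) *\<^sub>v x) + (- (iP * S)) *\<^sub>v x) $ i
        = t * ((iP * R) *\<^sub>v x) $ i + ((- (iP * S)) *\<^sub>v x) $ i"
      using i c(1-5) x by (simp del: index_mult_mat_vec)
    ultimately show ?thesis
      using mult_right_mono[of t 1 "((iP * R) *\<^sub>v x) $ i"] t by linarith
  qed
  moreover have "t \<cdot>\<^sub>v ((iP * R) *\<^sub>v x) + (- (iP * S)) *\<^sub>v x \<in> carrier_vec n"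
    using c(3-5) x by (intro add_carrier_vec smult_carrier_vec mult_mat_vec_carrier) auto
  ultimately show ?thesis
    using x by (intro le_vecI[of _ n])
qed

lemma double_regular_splitting_strict_subsolution:
  assumes n: "0 < n" and sp: "double_regular_splitting n A P R S iP"
    and t: "0 < t" "t \<le> 1" and rho: "rho (block_companion n (iP * R) (- (iP * S))) < t"
  obtains x where "x \<in> carrier_vec n" "\<And>i. i < n \<Longrightarrow> 0 < x $ i" "0\<^sub>v n \<le> A *\<^sub>v x"
    "\<And>i. i < n \<Longrightarrow> t * ((iP * R) *\<^sub>v x) $ i + ((- (iP * S)) *\<^sub>v x) $ i < t ^ 2 * x $ i"
proof -
  define H K where "H = iP * R" and "K = - (iP * S)"
  note d = double_regular_splittingD[OF sp, folded H_def K_def]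
  note c = double_splittingD[OF d(1)]
  have HK: "H \<in> carrier_mat n n" "K \<in> carrier_mat n n"
    using c(3-5) by (auto simp: H_def K_def)
  \<comment> \<open>Multiplying the fixed point equation by \<open>P\<close> turns \<open>f\<close> into the all-ones vector,
    which gives \<open>A x \<ge> 0\<close>.\<close>
  define f where "f = iP *\<^sub>v vec n (\<lambda>_. 1)"
  have f: "f \<in> carrier_vec n" "\<And>i. i < n \<Longrightarrow> 0 < f $ i"
    using nonneg_inverse_mult_ones_pos[OF c(5) c(2) d(2) c(7)] c(5) by (auto simp: f_def)
  then have f0: "0\<^sub>v n \<le> f"
    by (intro le_vecI[of _ n]) (auto simp: less_imp_le)
  obtain x where x: "x \<in> carrier_vec n" "0\<^sub>v n \<le> x"
    and eq: "t ^ 2 \<cdot>\<^sub>v x = t \<cdot>\<^sub>v (H *\<^sub>v x) + K *\<^sub>v x + t ^ 2 \<cdot>\<^sub>v f"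
    using block_companion_subsolution[OF HK(1) d(5) HK(2) d(6) n t(1) rho[folded H_def K_def]
        f(1) f0]
    by blast
  have eq_i: "t ^ 2 * x $ i = t * (H *\<^sub>v x) $ i + (K *\<^sub>v x) $ i + t ^ 2 * f $ i" if "i < n" for i
    using arg_cong[OF eq, of "\<lambda>v. v $ i"] that x f HK by (simp del: index_mult_mat_vec)
  have strict: "t * (H *\<^sub>v x) $ i + (K *\<^sub>v x) $ i < t ^ 2 * x $ i" if i: "i < n" for i
    using eq_i[OF i] f(2)[OF i] t(1) by simp
  have "0 < x $ i" if i: "i < n" for i
  proof -
    have "0 \<le> t * (H *\<^sub>v x) $ i" "0 \<le> (K *\<^sub>v x) $ i"
      using nonneg_vec_index[OF mult_mat_vec_nonneg[OF HK(1) d(5) x] i]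
        nonneg_vec_index[OF mult_mat_vec_nonneg[OF HK(2) d(6) x] i] t(1) by simp_all
    then have "0 < t ^ 2 * x $ i"
      using strict[OF i] by linarith
    then show ?thesis
      using t(1) by (simp add: zero_less_mult_iff)
  qed
  moreover have "0\<^sub>v n \<le> A *\<^sub>v x"
  proof (rule double_regular_splitting_mult_vec_nonneg[OF sp t x])
    have "P *\<^sub>v (t ^ 2 \<cdot>\<^sub>v x) = P *\<^sub>v (t \<cdot>\<^sub>v (H *\<^sub>v x) + K *\<^sub>v x + t ^ 2 \<cdot>\<^sub>v f)"
      by (simp only: eq)
    then have "t ^ 2 \<cdot>\<^sub>v (P *\<^sub>v x) = t \<cdot>\<^sub>v (R *\<^sub>v x) + - (S *\<^sub>v x) + t ^ 2 \<cdot>\<^sub>v vec n (\<lambda>_. 1)"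
      using double_splitting_inverse_mult_vec[OF d(1), folded H_def K_def] x f HK c(2-5)
      by (simp add: f_def mult_add_distrib_mat_vec[of P n n] mult_mat_vec[of P n n])
    then have "t ^ 2 \<cdot>\<^sub>v (P *\<^sub>v x) - t \<cdot>\<^sub>v (R *\<^sub>v x) + S *\<^sub>v x = t ^ 2 \<cdot>\<^sub>v vec n (\<lambda>_. 1)"
      using x c(2-5) by (intro eq_vecI) (auto simp: vec_eq_iff simp del: index_mult_mat_vec)
    then show "0\<^sub>v n \<le> t ^ 2 \<cdot>\<^sub>v (P *\<^sub>v x) - t \<cdot>\<^sub>v (R *\<^sub>v x) + S *\<^sub>v x"
      by (simp add: less_eq_vec_def)
  qed
  ultimately show thesis
    using that[OF x(1)] strict unfolding H_def K_def by blast
qed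

section \<open>Spectral radii of the iteration matrices\<close>

lemma rho_double_weak_regular_splitting_less_1:
  assumes n: "0 < n" and A: "monotone_with_inv n A iA"
    and sp: "double_weak_regular_splitting n A P R S iP"
  shows "rho (block_companion n (iP * R) (- (iP * S))) < 1"
proof -
  note d = double_weak_regular_splittingD[OF sp]
  note c = double_splittingD[OF d(1)]
  have iA: "iA \<in> carrier_mat n n" "A * iA = 1\<^sub>m n" "iA * A = 1\<^sub>m n" "0\<^sub>m n n \<le> iA"
    using A unfolding monotone_with_inv_def is_inv_def by auto
  define u where "u = iA *\<^sub>v vec n (\<lambda>_. 1)"
  have u: "u \<in> carrier_vec n" "\<And>i. i < n \<Longrightarrow> 0 < u $ i"
    using nonneg_inverse_mult_ones_pos[OF iA(1) c(1) iA(4,3)] iA by (auto simp: u_def)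
  have "A *\<^sub>v u = vec n (\<lambda>_. 1)"
    using assoc_mult_mat_vec[OF c(1) iA(1), of "vec n (\<lambda>_. 1)"] iA(2) by (simp add: u_def)
  then have Ku: "(- (iP * S)) *\<^sub>v u = u - (iP * R) *\<^sub>v u - iP *\<^sub>v vec n (\<lambda>_. 1)"
    using double_splitting_K_mult_vec[OF d(1) u(1)] by simp
  show ?thesis
  proof (rule rho_block_companion_less[OF _ d(3) _ d(4) u n])
    fix i assume i: "i < n"
    have "0 < (iP *\<^sub>v vec n (\<lambda>_. 1)) $ i"
      using nonneg_inverse_mult_ones_pos[OF c(5) c(2) d(2) c(7) i] .
    then show "1 * ((iP * R) *\<^sub>v u) $ i + ((- (iP * S)) *\<^sub>v u) $ i < 1 ^ 2 * u $ i"
      using arg_cong[OF Ku, of "\<lambda>v. v $ i"] i u c by (simp del: index_mult_mat_vec)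
  qed (use c in auto)
qed

lemma rho_block_companion_le_comparison:
  assumes n: "0 < n" and A: "monotone_with_inv n A iA"
    and sp1: "double_weak_regular_splitting n A P1 R1 S1 iP1"
    and sp2: "double_regular_splitting n A P2 R2 S2 iP2"
    and iP: "iP1 \<le> iP2" and H: "iP1 * R1 \<le> iP2 * R2"
  shows "rho (block_companion n (iP2 * R2) (- (iP2 * S2)))
    \<le> rho (block_companion n (iP1 * R1) (- (iP1 * S1)))"
proof -
  let ?T1 = "block_companion n (iP1 * R1) (- (iP1 * S1))"
  let ?T2 = "block_companion n (iP2 * R2) (- (iP2 * S2))"
  note d1 = double_weak_regular_splittingD[OF sp1] and d2 = double_regular_splittingD[OF sp2]
  note c1 = double_splittingD[OF d1(1)] and c2 = double_splittingD[OF d2(1)]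
  have HK1: "iP1 * R1 \<in> carrier_mat n n" "- (iP1 * S1) \<in> carrier_mat n n"
    using c1(3-5) by auto
  have HK2: "iP2 * R2 \<in> carrier_mat n n" "- (iP2 * S2) \<in> carrier_mat n n"
    using c2(3-5) by auto
  have T1: "?T1 \<in> carrier_mat (n + n) (n + n)" "0\<^sub>m (n + n) (n + n) \<le> ?T1"
    using HK1 block_companion_nonneg[OF HK1 d1(3,4)] by auto
  have T2: "?T2 \<in> carrier_mat (n + n) (n + n)" "0\<^sub>m (n + n) (n + n) \<le> ?T2"
    using HK2 block_companion_nonneg[OF HK2 d2(5,6)] by auto
  show ?thesis
  proof (cases "rho ?T2 \<le> 0")
    case True
    then show ?thesis
      using rho_nonneg[OF T1(1)] n by linarith
  next
    case False
    obtain y where y: "y \<in> carrier_vec (n + n)" "0\<^sub>v (n + n) \<le> y" "y \<noteq> 0\<^sub>v (n + n)"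
      and sub: "rho ?T2 \<cdot>\<^sub>v y \<le> ?T2 *\<^sub>v y"
      using rho_subeigenvector[OF T2] n by (metis add_gr_0)
    have "0 < rho ?T2"
      using False by simp
    then obtain w1 w2 where w: "w1 \<in> carrier_vec n" "w2 \<in> carrier_vec n" "w1 \<le> w2"
      "0\<^sub>v n \<le> A *\<^sub>v w2" and w0: "0\<^sub>v (n + n) \<le> w1 @\<^sub>v w2" "w1 @\<^sub>v w2 \<noteq> 0\<^sub>v (n + n)"
      and sub_w: "rho ?T2 \<cdot>\<^sub>v (w1 @\<^sub>v w2) \<le> ?T2 *\<^sub>v (w1 @\<^sub>v w2)"
      using double_regular_splitting_subeigenvector[OF A sp2 y _ sub] by blast
    have "rho ?T2 \<cdot>\<^sub>v (w1 @\<^sub>v w2) \<le> ?T1 *\<^sub>v (w1 @\<^sub>v w2)"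
      using sub_w double_splittings_block_companion_mult_vec_le[OF d1(1) d2(1) iP H w]
      by (rule order_trans)
    moreover have "w1 @\<^sub>v w2 \<in> carrier_vec (n + n)"
      using w by simp
    ultimately show ?thesis
      using subeigenvector_le_rho[OF T1 _ w0] by blast
  qed
qed

lemma rho_block_companion_product_less:
  assumes n: "0 < n"
    and sp1: "double_weak_regular_splitting n A P1 R1 S1 iP1"
    and sp2: "double_regular_splitting n A P2 R2 S2 iP2"
    and t: "rho (block_companion n (iP2 * R2) (- (iP2 * S2))) < t" "t < 1"
  shows "rho (block_companion n (iP2 * R2 + (- (iP2 * S2)) * (iP1 * R1))
      ((- (iP2 * S2)) * (- (iP1 * S1)))) < t"
proof -
  note c2 = double_splittingD[OF double_regular_splittingD(1)[OF sp2]]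
  have "block_companion n (iP2 * R2) (- (iP2 * S2)) \<in> carrier_mat (n + n) (n + n)"
    using c2(3-5) by auto
  then have t0: "0 < t"
    using rho_nonneg[of _ "n + n"] n t(1) by fastforce
  obtain x where x: "x \<in> carrier_vec n" "\<And>i. i < n \<Longrightarrow> 0 < x $ i" and Ax: "0\<^sub>v n \<le> A *\<^sub>v x"
    and strict: "\<And>i. i < n \<Longrightarrow> t * ((iP2 * R2) *\<^sub>v x) $ i + ((- (iP2 * S2)) *\<^sub>v x) $ i < t ^ 2 * x $ i"
    using double_regular_splitting_strict_subsolution[OF n sp2 t0 _ t(1)] t(2) by auto
  define H1 K1 H2 K2
    where "H1 = iP1 * R1" and "K1 = - (iP1 * S1)" and "H2 = iP2 * R2" and "K2 = - (iP2 * S2)"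
  note d1 = double_weak_regular_splittingD[OF sp1, folded H1_def K1_def]
  note d2 = double_regular_splittingD[OF sp2, folded H2_def K2_def]
  note c1 = double_splittingD[OF d1(1)]
  have HK: "H1 \<in> carrier_mat n n" "K1 \<in> carrier_mat n n"
    "H2 \<in> carrier_mat n n" "K2 \<in> carrier_mat n n"
    using c1(3-5) c2(3-5) by (auto simp: H1_def K1_def H2_def K2_def)
  have Hw: "H2 + K2 * H1 \<in> carrier_mat n n" "0\<^sub>m n n \<le> H2 + K2 * H1"
    using HK d2(5) mult_mat_nonneg[OF HK(4) d2(6) HK(1) d1(3)] by (auto simp: less_eq_mat_def)
  have Kw: "K2 * K1 \<in> carrier_mat n n" "0\<^sub>m n n \<le> K2 * K1"
    using HK mult_mat_nonneg[OF HK(4) d2(6) HK(2) d1(4)] by auto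
  have x0: "0\<^sub>v n \<le> x"
    using x by (intro le_vecI[of _ n]) (auto simp: less_imp_le)
  have y: "t \<cdot>\<^sub>v (H1 *\<^sub>v x) + K1 *\<^sub>v x \<le> x"
    using double_weak_regular_splitting_mult_vec_le[OF sp1 _ x(1) x0 Ax, folded H1_def K1_def] t
    by simp
  have "rho (block_companion n (H2 + K2 * H1) (K2 * K1)) < t"
  proof (rule rho_block_companion_less[OF Hw Kw x n t0])
    fix i assume i: "i < n"
    have "(H2 + K2 * H1) *\<^sub>v x = H2 *\<^sub>v x + K2 *\<^sub>v (H1 *\<^sub>v x)"
      using HK x by (simp add: add_mult_distrib_mat_vec[of _ n n])
    moreover have "(K2 * K1) *\<^sub>v x = K2 *\<^sub>v (K1 *\<^sub>v x)"
      using HK x by simp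
    moreover have "K2 *\<^sub>v (t \<cdot>\<^sub>v (H1 *\<^sub>v x) + K1 *\<^sub>v x) = t \<cdot>\<^sub>v (K2 *\<^sub>v (H1 *\<^sub>v x)) + K2 *\<^sub>v (K1 *\<^sub>v x)"
      using HK x by (simp add: mult_add_distrib_mat_vec[of K2 n n] mult_mat_vec[of K2 n n])
    moreover have "K2 *\<^sub>v (t \<cdot>\<^sub>v (H1 *\<^sub>v x) + K1 *\<^sub>v x) \<le> K2 *\<^sub>v x"
      using mult_mat_vec_mono[OF HK(4) d2(6) _ x(1) y] HK x by simp
    ultimately have "t * ((H2 + K2 * H1) *\<^sub>v x) $ i + ((K2 * K1) *\<^sub>v x) $ i
        \<le> t * (H2 *\<^sub>v x) $ i + (K2 *\<^sub>v x) $ i"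
      using HK x i by (auto simp: less_eq_vec_def distrib_left simp del: index_mult_mat_vec)
    then show "t * ((H2 + K2 * H1) *\<^sub>v x) $ i + ((K2 * K1) *\<^sub>v x) $ i < t ^ 2 * x $ i"
      using strict[OF i, folded H2_def K2_def] by linarith
  qed
  then show ?thesis
    unfolding H1_def K1_def H2_def K2_def .
qed

lemma rho_block_companion_product_le:
  assumes n: "0 < n"
    and sp1: "double_weak_regular_splitting n A P1 R1 S1 iP1"
    and sp2: "double_regular_splitting n A P2 R2 S2 iP2"
    and rho2: "rho (block_companion n (iP2 * R2) (- (iP2 * S2))) < 1"
  shows "rho (block_companion n (iP2 * R2 + (- (iP2 * S2)) * (iP1 * R1))
      ((- (iP2 * S2)) * (- (iP1 * S1))))
    \<le> rho (block_companion n (iP2 * R2) (- (iP2 * S2)))"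
proof (rule dense_ge_bounded[OF rho2])
  fix t assume "rho (block_companion n (iP2 * R2) (- (iP2 * S2))) < t" "t < 1"
  from rho_block_companion_product_less[OF n sp1 sp2 this] show "rho (block_companion n
      (iP2 * R2 + (- (iP2 * S2)) * (iP1 * R1)) ((- (iP2 * S2)) * (- (iP1 * S1)))) \<le> t"
    by (rule less_imp_le)
qed

theorem corollary3p9:
  fixes n :: nat and A iA P1 R1 S1 iP1 P2 R2 S2 iP2 iAh :: "real mat"
  assumes "n > 0"
    and "monotone_with_inv n A iA"
    and "double_weak_regular_splitting n A P1 R1 S1 iP1"
    and "double_regular_splitting n A P2 R2 S2 iP2"
    and "1 \<notin> spectrum (S2 * iP1)"
    and "is_inv n ((1\<^sub>m n - S2 * iP1) * A) iAh" and "iAh \<ge> 0\<^sub>m n n"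
    and "iP1 \<le> iP2" and "iP1 * R1 \<le> iP2 * R2"
  shows "rho (four_block_mat (iP2 * R2 - iP2 * S2 * iP1 * R1) (iP2 * S2 * iP1 * S1) (1\<^sub>m n) (0\<^sub>m n n))
           \<le> rho (four_block_mat (iP1 * R1) (- (iP1 * S1)) (1\<^sub>m n) (0\<^sub>m n n))
       \<and> rho (four_block_mat (iP1 * R1) (- (iP1 * S1)) (1\<^sub>m n) (0\<^sub>m n n)) < 1"
proof -
  note sp1 = assms(3) and sp2 = assms(4)
  note c1 = double_splittingD[OF double_weak_regular_splittingD(1)[OF sp1]]
  note c2 = double_splittingD[OF double_regular_splittingD(1)[OF sp2]]
  have "iP2 * R2 - iP2 * S2 * iP1 * R1 = iP2 * R2 + (- (iP2 * S2)) * (iP1 * R1)"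
    using c1 c2 by (simp add: assoc_mult_mat[of _ n n _ n _ n] minus_add_uminus_mat[of _ n n])
  moreover have "iP2 * S2 * iP1 * S1 = (- (iP2 * S2)) * (- (iP1 * S1))"
    using c1 c2 by (simp add: assoc_mult_mat[of _ n n _ n _ n])
  moreover have T1: "rho (block_companion n (iP1 * R1) (- (iP1 * S1))) < 1"
    using rho_double_weak_regular_splitting_less_1[OF assms(1,2) sp1] .
  moreover have T21: "rho (block_companion n (iP2 * R2) (- (iP2 * S2)))
      \<le> rho (block_companion n (iP1 * R1) (- (iP1 * S1)))"
    using rho_block_companion_le_comparison[OF assms(1,2) sp1 sp2 assms(8,9)] .
  moreover have "rho (block_companion n (iP2 * R2 + (- (iP2 * S2)) * (iP1 * R1))
      ((- (iP2 * S2)) * (- (iP1 * S1)))) \<le> rho (block_companion n (iP2 * R2) (- (iP2 * S2)))"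
    using rho_block_companion_product_le[OF assms(1) sp1 sp2] T21 T1 by simp
  ultimately show ?thesis
    by simp
qed

end
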